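(* Fix $z\in(0,1/4)$. The function $x\mapsto zQ(x,0,z)$ (continued holomorphically to $\mathbb{C}\setminus[x_3,x_4]$) is holomorphic in $\mathscr{G}X$, continuous up to its boundary, and satisfies $$z\big[Q(t,0,z)-Q(\bar t,0,z)\big]=tY_0(t)-\bar tY_0(\bar t)\quad\text{for all }t\in X([y_1,y_2]).$$ The function $y\mapsto z(y+1)Q(0,y,z)$ (continued holomorphically to $\mathbb{C}\setminus[y_3,y_4]$) is holomorphic in $\mathscr{G}Y$, continuous up to its boundary, and satisfies $$z\big[(t+1)Q(0,t,z)-(\bar t+1)Q(0,\bar t,z)\big]=X_0(t)t-X_0(\bar t)\bar t\quad\text{for all }t\in Y([x_1,x_2]).$$
   Context: Gessel's walks are lattice walks in $\mathbb{Z}_+^2$ starting at $(0,0)$, with unit steps $(-1,0)$, $(1,1)$, $(1,0)$, $(-1,-1)$, never leaving $\mathbb{Z}_+^2$; $q(i,j,k)$ is the number of such walks of length $k$ ending at $(i,j)$ and $Q(x,y,z)=\sum q(i,j,k)x^iy^jz^k$. Fix $z\in(0,1/4)$; $\tilde a(y)=zy(y+1)$, $\tilde b(y)=-y$, $\tilde c(y)=z(y+1)$, $a(x)=zx^2$, $b(x)=zx^2-x+z$, $c(x)=z$, $\tilde d=\tilde b^2-4\tilde a\tilde c$, $d=b^2-4ac$. Roots: $y_1=0$, $y_2=[1-8z^2-(1-16z^2)^{1/2}]/(8z^2)$, $y_3=[1-8z^2+(1-16z^2)^{1/2}]/(8z^2)$, $y_4=\infty$; $x_1=[1+2z-(1+4z)^{1/2}]/(2z)$,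 $x_2=[1-2z-(1-4z)^{1/2}]/(2z)$, $x_3=[1-2z+(1-4z)^{1/2}]/(2z)$, $x_4=[1+2z+(1+4z)^{1/2}]/(2z)$. $X_0,X_1$ are the branches $(-\tilde b\pm\tilde d^{1/2})/(2\tilde a)$, meromorphic on $\mathbb{C}\setminus([y_1,y_2]\cup[y_3,y_4])$ with $|X_0|\le|X_1|$; $Y_0,Y_1$ are the branches $(-b\pm d^{1/2})/(2a)$, meromorphic on $\mathbb{C}\setminus([x_1,x_2]\cup[x_3,x_4])$ with $|Y_0|\le|Y_1|$. It is known that $zQ(x,0,z)$ and $z(y+1)Q(0,y,z)$ extend holomorphically from the unit disc to $\mathbb{C}\setminus[x_3,x_4]$ and $\mathbb{C}\setminus[y_3,y_4]$ respectively. For $y\in[y_1,y_2]$, $\tilde d(y)\le0$ and the limits of $X_0$ from the upper/lower half-plane are $X_0^\pm(y)=(-\tilde b(y)\mp i(-\tilde d(y))^{1/2})/(2\tilde a(y))$; $X([y_1,y_2])=\{X_0^\pm(y):y\in[y_1,y_2]\}$, a curve symmetric with respect to the real axis and containing $\infty$. Likewise $Y([x_1,x_2])=\{Y_0^\pm(x):x\in[x_1,x_2]\}$ with $Y_0^\pm(x)=(-b(x)\mp i(-d(x))^{1/2})/(2a(x))$, a closed curve. Each of these curves splits $\mathbb{C}$ into two connected components; $\mathscr{G}X$ denotes the one of $\mathbb{C}\setminus X([y_1,y_2])$ containing $x_1$, and $\mathscr{G}Y$ the one of $\mathbb{C}\setminus Y([x_1,x_2])$ containing $y_1$; one has $\mathscr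 GX\subset\mathbb{C}\setminus[x_3,x_4]$ and $\mathscr GY\subset\mathbb{C}\setminus[y_3,y_4]$. *)

theory Defs
  imports "HOL-Analysis.Analysis"
begin

text \<open>Number of Gessel walks of length k from (0,0) to (i,j) staying in the quarter plane,
  with steps (-1,0),(1,1),(1,0),(-1,-1).  Written qw k i j (= q(i,j,k) in the paper).\<close>
fun qw :: "nat \<Rightarrow> int \<Rightarrow> int \<Rightarrow> nat" where
  "qw 0 i j = (if i = 0 \<and> j = 0 then 1 else 0)"
| "qw (Suc k) i j =
     (if i < 0 \<or> j < 0 then 0
      else qw k (i + 1) j + qw k (i - 1) (j - 1) + qw k (i - 1) j + qw k (i + 1) (j + 1))"

text \<open>Generating function Q(x,y,z) = sum q(i,j,k) x^i y^j z^k (note i,j \<le> k).\<close>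
definition Qgf :: "complex \<Rightarrow> complex \<Rightarrow> real \<Rightarrow> complex" where
  "Qgf x y z = (\<Sum>k. \<Sum>i\<le>k. \<Sum>j\<le>k.
      of_nat (qw k (int i) (int j)) * x ^ i * y ^ j * complex_of_real z ^ k)"

definition atil :: "real \<Rightarrow> 'a::real_field \<Rightarrow> 'a" where "atil z y = of_real z * y * (y + 1)"
definition btil :: "real \<Rightarrow> 'a::real_field \<Rightarrow> 'a" where "btil z y = - y"
definition ctil :: "real \<Rightarrow> 'a::real_field \<Rightarrow> 'a" where "ctil z y = of_real z * (y + 1)"
definition dtil :: "real \<Rightarrow> 'a::real_field \<Rightarrow> 'a" where "dtil z y = (btil z y)^2 - 4 * atil z y * ctil z y"

definition ak :: "real \<Rightarrow> 'a::real_field \<Rightarrow> 'a" where "ak z x = of_real z * x^2"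
definition bk :: "real \<Rightarrow> 'a::real_field \<Rightarrow> 'a" where "bk z x = of_real z * x^2 - x + of_real z"
definition ck :: "real \<Rightarrow> 'a::real_field \<Rightarrow> 'a" where "ck z x = of_real z"
definition dk :: "real \<Rightarrow> 'a::real_field \<Rightarrow> 'a" where "dk z x = (bk z x)^2 - 4 * ak z x * ck z x"

definition y1 :: "real \<Rightarrow> real" where "y1 z = 0"
definition y2 :: "real \<Rightarrow> real" where "y2 z = (1 - 8*z^2 - sqrt (1 - 16*z^2)) / (8*z^2)"
definition y3 :: "real \<Rightarrow> real" where "y3 z = (1 - 8*z^2 + sqrt (1 - 16*z^2)) / (8*z^2)"
definition x1 :: "real \<Rightarrow> real" where "x1 z = (1 + 2*z - sqrt (1 + 4*z)) / (2*z)"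
definition x2 :: "real \<Rightarrow> real" where "x2 z = (1 - 2*z - sqrt (1 - 4*z)) / (2*z)"
definition x3 :: "real \<Rightarrow> real" where "x3 z = (1 - 2*z + sqrt (1 - 4*z)) / (2*z)"
definition x4 :: "real \<Rightarrow> real" where "x4 z = (1 + 2*z + sqrt (1 + 4*z)) / (2*z)"

definition X0 :: "real \<Rightarrow> complex \<Rightarrow> complex" where
  "X0 z y = (let r1 = (- btil z y + csqrt (dtil z y)) / (2 * atil z y);
                 r2 = (- btil z y - csqrt (dtil z y)) / (2 * atil z y)
             in if cmod r1 \<le> cmod r2 then r1 else r2)"

definition Y0 :: "real \<Rightarrow> complex \<Rightarrow> complex" where
  "Y0 z x = (let r1 = (- bk z x + csqrt (dk z x)) / (2 * ak z x);
                 r2 = (- bk z x - csqrt (dk z x)) / (2 * ak z x)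
             in if cmod r1 \<le> cmod r2 then r1 else r2)"

definition X0pm :: "real \<Rightarrow> real \<Rightarrow> real \<Rightarrow> complex" where
  "X0pm s z y = (complex_of_real (- btil z y) - s * \<i> * complex_of_real (sqrt (- dtil z y)))
                 / complex_of_real (2 * atil z y)"

definition Y0pm :: "real \<Rightarrow> real \<Rightarrow> real \<Rightarrow> complex" where
  "Y0pm s z x = (complex_of_real (- bk z x) - s * \<i> * complex_of_real (sqrt (- dk z x)))
                 / complex_of_real (2 * ak z x)"

text \<open>Finite points of X([y1,y2]); the point at infinity (y = y1 = 0, where at vanishes) is
  omitted since it is not a point of the complex plane.\<close>
definition Xcurve :: "real \<Rightarrow> complex set" where
  "Xcurve z = {X0pm s z y | s y. s \<in> {1, -1} \<and> y \<in> {y1 z..y2 z} \<and> atil z y \<noteq> 0}"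

definition Ycurve :: "real \<Rightarrow> complex set" where
  "Ycurve z = {Y0pm s z x | s x. s \<in> {1, -1} \<and> x \<in> {x1 z..x2 z}}"

definition GX :: "real \<Rightarrow> complex set" where
  "GX z = connected_component_set (- Xcurve z) (complex_of_real (x1 z))"

definition GY :: "real \<Rightarrow> complex set" where
  "GY z = connected_component_set (- Ycurve z) (complex_of_real (y1 z))"

end

theory Submission
  imports Defs "HOL-Complex_Analysis.Complex_Analysis"
begin

text \<open>Removing the last step of a walk gives the kernel equation
  K(x,y) Q(x,y) = xy - zy Q(0,y) - z(Q(x,0) + Q(0,y) - Q(0,0)) on the unit bidisc, where
  K(x,y) = xy - z(y + x^2 y^2 + x^2 y + 1) = -(atil(y) x^2 + btil(y) x + ctil(y)); so with
  F = zQ(x,0) and G = z(y+1)Q(0,y) one has F(x) + G(y) - xy = F(0) wherever K(x,y) = 0 and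
  both variables are small. The root X0(y) of the kernel of smaller modulus is holomorphic in the
  y-plane slit along (-\<infinity>, y2] and [y3, \<infinity>) and never meets the cut [x3, x4], so by analytic
  continuation F(X0(y)) + G(y) - X0(y) y = F(0) on the whole slit plane. The two conjugate points
  X0^+(y), X0^-(y) of X([y1, y2]) are the limits of X0 from both sides of (0, y2), and both are
  mapped back to y by Y0; subtracting the two limiting relations gives the jump of F. At the
  conjugate points Y0^+(x), Y0^-(x) of Y([x1, x2]), which lie in the slit plane, X0 equals x, and the
  same subtraction gives the jump of G. The domains GX and GY stay away from the cuts because
  explicit functions vanishing on the curves separate their base points from the cuts.\<close>


section \<open>Walks and the kernel equation\<close>

lemma qw_eq_0_if_neg: "i < 0 \<or> j < 0 \<Longrightarrow> qw k i j = 0"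
  by (cases k) auto

lemma qw_eq_0_if_gt: "i > int k \<or> j > int k \<Longrightarrow> qw k i j = 0"
  by (induction k arbitrary: i j) auto

text \<open>walk_sum N k is the generating polynomial of the walks of length k, truncated at degree N
  in both variables; taking N = k + 1 leaves room for the index shifts of the one-step recursion.\<close>

definition walk_sum :: "nat \<Rightarrow> nat \<Rightarrow> complex \<Rightarrow> complex \<Rightarrow> complex" where
  "walk_sum N k x y = (\<Sum>i\<le>N. \<Sum>j\<le>N. of_nat (qw k (int i) (int j)) * x ^ i * y ^ j)"

definition walk_row_sum :: "nat \<Rightarrow> nat \<Rightarrow> int \<Rightarrow> complex \<Rightarrow> complex" where
  "walk_row_sum N k i y = (\<Sum>j\<le>N. of_nat (qw k i (int j)) * y ^ j)"

lemma walk_sum_by_rows: "walk_sum N k x y = (\<Sum>i\<le>N. walk_row_sum N k (int i) y * x ^ i)"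
  unfolding walk_sum_def walk_row_sum_def by (simp add: sum_distrib_right sum_distrib_left mult_ac)

lemma sum_shift_index_down:
  fixes f :: "int \<Rightarrow> 'a::comm_ring_1"
  assumes "f (-1) = 0" "f (int N) = 0" "N \<ge> 1"
  shows "(\<Sum>j\<le>N. f (int j - 1) * w ^ j) = w * (\<Sum>j\<le>N. f (int j) * w ^ j)"
proof -
  obtain M where N: "N = Suc M" using assms(3) by (cases N) auto
  have "(\<Sum>j\<le>N. f (int j - 1) * w ^ j) = f (-1) + (\<Sum>j\<le>M. f (int (Suc j) - 1) * w ^ (Suc j))"
    unfolding N by (subst sum.atMost_Suc_shift) simp
  also have "\<dots> = w * (\<Sum>j\<le>M. f (int j) * w ^ j)"
    using assms(1) by (simp add: sum_distrib_left mult_ac)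
  also have "\<dots> = w * (\<Sum>j\<le>N. f (int j) * w ^ j)"
    using assms(2) unfolding N by simp
  finally show ?thesis .
qed

lemma sum_shift_index_up:
  fixes f :: "int \<Rightarrow> 'a::comm_ring_1"
  assumes "f (int N + 1) = 0"
  shows "(\<Sum>j\<le>N. f (int j + 1) * w ^ Suc j) = (\<Sum>j\<le>N. f (int j) * w ^ j) - f 0"
proof -
  have "(\<Sum>j\<le>Suc N. f (int j) * w ^ j) = f 0 + (\<Sum>j\<le>N. f (int (Suc j)) * w ^ Suc j)"
    by (subst sum.atMost_Suc_shift) simp
  moreover have "(\<Sum>j\<le>Suc N. f (int j) * w ^ j) = (\<Sum>j\<le>N. f (int j) * w ^ j)"
    using assms by (simp add: add.commute)
  ultimately show ?thesis by (simp add: algebra_simps)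
qed

lemma walk_row_sum_step:
  assumes "N = Suc k" and "i \<ge> 0"
  shows "y * walk_row_sum N (Suc k) i y = (y + 1) * walk_row_sum N k (i + 1) y
           + (y + y^2) * walk_row_sum N k (i - 1) y - of_nat (qw k (i + 1) 0)"
proof -
  let ?f1 = "\<lambda>j. of_nat (qw k (i + 1) j) :: complex"
  let ?f2 = "\<lambda>j. of_nat (qw k (i - 1) j) :: complex"
  have step: "walk_row_sum N (Suc k) i y = walk_row_sum N k (i + 1) y + walk_row_sum N k (i - 1) y
        + (\<Sum>j\<le>N. ?f2 (int j - 1) * y ^ j) + (\<Sum>j\<le>N. ?f1 (int j + 1) * y ^ j)"
    using assms(2) unfolding walk_row_sum_def by (simp add: sum.distrib algebra_simps)
  have down: "(\<Sum>j\<le>N. ?f2 (int j - 1) * y ^ j) = y * walk_row_sum N k (i - 1) y"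
    unfolding walk_row_sum_def using assms(1)
    by (subst sum_shift_index_down) (auto simp: qw_eq_0_if_neg qw_eq_0_if_gt)
  have "y * (\<Sum>j\<le>N. ?f1 (int j + 1) * y ^ j) = (\<Sum>j\<le>N. ?f1 (int j + 1) * y ^ Suc j)"
    by (simp add: sum_distrib_left mult_ac)
  also have "\<dots> = walk_row_sum N k (i + 1) y - ?f1 0"
    unfolding walk_row_sum_def using assms(1) by (subst sum_shift_index_up) (auto simp: qw_eq_0_if_gt)
  finally show ?thesis unfolding step using down by (simp add: algebra_simps power2_eq_square)
qed

lemma walk_sum_step:
  assumes "N = Suc k"
  shows "x * y * walk_sum N (Suc k) x y = (y + x^2*y^2 + x^2*y + 1) * walk_sum N k x y
          - y * walk_sum N k 0 y - (walk_sum N k x 0 + walk_sum N k 0 y - walk_sum N k 0 0)"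
proof -
  let ?R = "\<lambda>i. walk_row_sum N k i y"
  let ?c = "\<lambda>i. of_nat (qw k i 0) :: complex"
  have at_0y: "walk_sum N k 0 y = ?R 0" by (simp add: walk_sum_by_rows sum.atMost_shift)
  have at_x0: "walk_sum N k x 0 = (\<Sum>i\<le>N. ?c (int i) * x ^ i)"
    unfolding walk_sum_by_rows walk_row_sum_def by (simp add: sum.atMost_shift)
  have at_00: "walk_sum N k 0 0 = ?c 0"
    unfolding walk_sum_by_rows walk_row_sum_def by (simp add: sum.atMost_shift)
  have "x * y * walk_sum N (Suc k) x y = (\<Sum>i\<le>N. (y * walk_row_sum N (Suc k) (int i) y) * x ^ Suc i)"
    by (simp add: walk_sum_by_rows sum_distrib_left mult_ac)
  also have "\<dots> = (\<Sum>i\<le>N. ((y + 1) * ?R (int i + 1) + (y + y^2) * ?R (int i - 1) - ?c (int i + 1)) * x ^ Suc i)"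
    using assms by (intro sum.cong refl) (simp add: walk_row_sum_step)
  also have "\<dots> = (y + 1) * (\<Sum>i\<le>N. ?R (int i + 1) * x ^ Suc i)
      + (y + y^2) * x * (\<Sum>i\<le>N. ?R (int i - 1) * x ^ i) - (\<Sum>i\<le>N. ?c (int i + 1) * x ^ Suc i)"
    by (simp add: algebra_simps sum.distrib sum_subtractf sum_distrib_left power2_eq_square)
  also have "(\<Sum>i\<le>N. ?R (int i + 1) * x ^ Suc i) = walk_sum N k x y - ?R 0"
    unfolding walk_sum_by_rows using assms
    by (subst sum_shift_index_up) (auto simp: walk_row_sum_def qw_eq_0_if_gt)
  also have "(\<Sum>i\<le>N. ?R (int i - 1) * x ^ i) = x * walk_sum N k x y"
    unfolding walk_sum_by_rows using assms
    by (subst sum_shift_index_down) (auto simp: walk_row_sum_def qw_eq_0_if_gt qw_eq_0_if_neg)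
  also have "(\<Sum>i\<le>N. ?c (int i + 1) * x ^ Suc i) = walk_sum N k x 0 - ?c 0"
    unfolding at_x0 using assms by (subst sum_shift_index_up) (auto simp: qw_eq_0_if_gt)
  finally show ?thesis unfolding at_0y at_00 by (simp add: algebra_simps power2_eq_square)
qed

lemma walk_sum_Suc_eq: "N \<ge> k \<Longrightarrow> walk_sum (Suc N) k x y = walk_sum N k x y"
  unfolding walk_sum_def by (simp add: qw_eq_0_if_gt)

lemma walk_sum_eq_if_ge: "N \<ge> k \<Longrightarrow> walk_sum N k x y = walk_sum k k x y"
proof (induction N rule: dec_induct)
  case (step n)
  then show ?case using walk_sum_Suc_eq[of k n] by simp
qed simp

definition walk_poly :: "nat \<Rightarrow> complex \<Rightarrow> complex \<Rightarrow> complex" where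
  "walk_poly k x y = walk_sum k k x y"

lemma walk_poly_0 [simp]: "walk_poly 0 x y = 1"
  by (simp add: walk_poly_def walk_sum_def)

lemma walk_poly_Suc:
  "x * y * walk_poly (Suc k) x y = (y + x^2*y^2 + x^2*y + 1) * walk_poly k x y - y * walk_poly k 0 y
     - (walk_poly k x 0 + walk_poly k 0 y - walk_poly k 0 0)"
  using walk_sum_step[of "Suc k" k x y] walk_sum_eq_if_ge[of k "Suc k"] unfolding walk_poly_def by simp

definition walk_count :: "nat \<Rightarrow> nat" where
  "walk_count k = (\<Sum>i\<le>k. \<Sum>j\<le>k. qw k (int i) (int j))"

lemma walk_count_le: "walk_count k \<le> 4 ^ k"
proof (induction k)
  case 0
  then show ?case by (simp add: walk_count_def)
next
  case (Suc k)
  let ?col = "\<Sum>j\<le>k. qw k 0 (int j)" and ?row = "\<Sum>i\<le>k. qw k (int i) 0"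
  have "walk_poly (Suc k) 1 1 = 4 * walk_poly k 1 1 - 2 * walk_poly k 0 1 - walk_poly k 1 0 + walk_poly k 0 0"
    using walk_poly_Suc[of 1 1 k] by simp
  moreover have "walk_poly n 1 1 = of_nat (walk_count n)" for n
    by (simp add: walk_poly_def walk_sum_def walk_count_def)
  moreover have "walk_poly k 0 1 = of_nat ?col" "walk_poly k 1 0 = of_nat ?row"
    "walk_poly k 0 0 = of_nat (qw k 0 0)"
    by (simp_all add: walk_poly_def walk_sum_def sum.atMost_shift)
  ultimately have "of_nat (walk_count (Suc k) + 2 * ?col + ?row) = (of_nat (4 * walk_count k + qw k 0 0) :: complex)"
    by (simp add: algebra_simps)
  then have "walk_count (Suc k) + 2 * ?col + ?row = 4 * walk_count k + qw k 0 0"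
    using of_nat_eq_iff by blast
  moreover have "qw k 0 0 \<le> ?row"
    using member_le_sum[of 0 "{..k}" "\<lambda>i. qw k (int i) 0"] by simp
  ultimately show ?case using Suc by simp
qed

lemma norm_walk_poly_le:
  assumes "cmod x \<le> 1" "cmod y \<le> 1"
  shows "cmod (walk_poly k x y) \<le> 4 ^ k"
proof -
  have "cmod (walk_poly k x y) \<le> (\<Sum>i\<le>k. \<Sum>j\<le>k. cmod (of_nat (qw k (int i) (int j)) * x ^ i * y ^ j))"
    unfolding walk_poly_def walk_sum_def by (rule order.trans[OF norm_sum sum_mono]) (rule norm_sum)
  also have "\<dots> \<le> (\<Sum>i\<le>k. \<Sum>j\<le>k. real (qw k (int i) (int j)))"
  proof (intro sum_mono)
    fix i j
    have "cmod x ^ i * cmod y ^ j \<le> 1"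
      using assms by (intro mult_le_one power_le_one) auto
    then have "real (qw k (int i) (int j)) * (cmod x ^ i * cmod y ^ j) \<le> real (qw k (int i) (int j))"
      by (rule mult_left_le) simp
    then show "cmod (of_nat (qw k (int i) (int j)) * x ^ i * y ^ j) \<le> real (qw k (int i) (int j))"
      by (simp add: norm_mult norm_power mult.assoc)
  qed
  also have "\<dots> = real (walk_count k)"
    by (simp add: walk_count_def)
  also have "\<dots> \<le> 4 ^ k"
    using walk_count_le[of k] by (metis of_nat_le_iff of_nat_numeral of_nat_power)
  finally show ?thesis .
qed

lemma walk_poly_sums_Qgf:
  assumes "cmod x \<le> 1" "cmod y \<le> 1" "0 \<le> z" "z < 1/4"
  shows "(\<lambda>k. walk_poly k x y * complex_of_real z ^ k) sums Qgf x y z"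
proof -
  have "summable (\<lambda>k. (4 * z) ^ k)" using assms by (intro summable_geometric) auto
  then have "summable (\<lambda>k. walk_poly k x y * complex_of_real z ^ k)"
  proof (rule summable_comparison_test'[where N = 0])
    fix k
    have "cmod (walk_poly k x y * complex_of_real z ^ k) \<le> 4 ^ k * z ^ k"
      using norm_walk_poly_le[OF assms(1,2), of k] assms(3)
      by (simp add: norm_mult norm_power mult_right_mono)
    then show "norm (walk_poly k x y * complex_of_real z ^ k) \<le> (4 * z) ^ k"
      by (simp add: power_mult_distrib)
  qed
  then show ?thesis
    unfolding Qgf_def walk_poly_def walk_sum_def by (simp add: summable_sums sum_distrib_right)
qed

lemma Qgf_kernel_equation:
  assumes "cmod x \<le> 1" "cmod y \<le> 1" "0 \<le> z" "z < 1/4"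
  shows "x * y * Qgf x y z = x * y + complex_of_real z * ((y + x^2*y^2 + x^2*y + 1) * Qgf x y z
        - y * Qgf 0 y z - (Qgf x 0 z + Qgf 0 y z - Qgf 0 0 z))"
proof -
  define zc where "zc = complex_of_real z"
  define S where "S = y + x^2*y^2 + x^2*y + 1"
  define a where "a = (\<lambda>u v k. walk_poly k u v * zc ^ k)"
  have sums: "a u v sums Qgf u v z" if "cmod u \<le> 1" "cmod v \<le> 1" for u v
    unfolding a_def zc_def using walk_poly_sums_Qgf[OF that assms(3,4)] .
  have "(\<lambda>k. zc * (S * a x y k - y * a 0 y k - (a x 0 k + a 0 y k - a 0 0 k))) sums
        (zc * (S * Qgf x y z - y * Qgf 0 y z - (Qgf x 0 z + Qgf 0 y z - Qgf 0 0 z)))"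
    using assms by (intro sums_mult sums_diff sums_add sums) auto
  moreover have "zc * (S * a x y k - y * a 0 y k - (a x 0 k + a 0 y k - a 0 0 k)) = x * y * a x y (Suc k)"
    for k
  proof -
    have "zc * (S * a x y k - y * a 0 y k - (a x 0 k + a 0 y k - a 0 0 k))
        = zc * zc ^ k * (S * walk_poly k x y - y * walk_poly k 0 y
            - (walk_poly k x 0 + walk_poly k 0 y - walk_poly k 0 0))"
      unfolding a_def by algebra
    also have "\<dots> = zc * zc ^ k * (x * y * walk_poly (Suc k) x y)"
      unfolding S_def by (simp only: walk_poly_Suc)
    also have "\<dots> = x * y * a x y (Suc k)"
      unfolding a_def power_Suc by algebra
    finally show ?thesis .
  qed
  ultimately have "(\<lambda>k. x * y * a x y (Suc k)) sums
      (zc * (S * Qgf x y z - y * Qgf 0 y z - (Qgf x 0 z + Qgf 0 y z - Qgf 0 0 z)))"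
    by simp
  moreover have "a x y 0 = 1"
    by (simp add: a_def)
  ultimately have "(\<lambda>k. x * y * a x y k) sums
      (zc * (S * Qgf x y z - y * Qgf 0 y z - (Qgf x 0 z + Qgf 0 y z - Qgf 0 0 z)) + x * y)"
    using sums_Suc_iff[of "\<lambda>k. x * y * a x y k"] by simp
  moreover have "(\<lambda>k. x * y * a x y k) sums (x * y * Qgf x y z)"
    using sums_mult[OF sums[OF assms(1,2)]] .
  ultimately have "zc * (S * Qgf x y z - y * Qgf 0 y z - (Qgf x 0 z + Qgf 0 y z - Qgf 0 0 z)) + x * y
      = x * y * Qgf x y z"
    by (rule sums_unique2)
  then show ?thesis unfolding zc_def S_def by (simp only: add.commute)
qed

section \<open>Quadratic equations\<close>

lemma reciprocal_quadratic_roots: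
  fixes a b t :: real
  assumes a: "0 < a" and b: "2 * a < b"
  defines "r1 \<equiv> (b - sqrt (b^2 - 4*a^2)) / (2*a)" and "r2 \<equiv> (b + sqrt (b^2 - 4*a^2)) / (2*a)"
  shows "a * (t - r1) * (t - r2) = a*t^2 - b*t + a" and "0 < r1" and "r1 < 1" and "1 < r2"
proof -
  define s where "s = sqrt (b^2 - 4*a^2)"
  have "(2*a)^2 < b^2"
    using a b by (intro power_strict_mono) auto
  then have "0 \<le> b^2 - 4*a^2" by (simp add: power_mult_distrib)
  then have s2: "s^2 = b^2 - 4*a^2" and s0: "0 \<le> s"
    by (simp_all add: s_def real_sqrt_pow2)
  have "s^2 < b^2" using s2 a by simp
  then have "s < b" using a b by (smt (verit) power2_le_imp_le)
  have "(b - 2*a)^2 < s^2"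
    unfolding s2 using a b by (simp add: power2_eq_square algebra_simps)
  then have "b - 2*a < s" using s0 by (smt (verit) power2_le_imp_le)
  have r: "r1 = (b - s) / (2*a)" "r2 = (b + s) / (2*a)"
    by (simp_all add: r1_def r2_def s_def)
  have "a * (t - r1) * (t - r2) = a*t^2 - b*t + (b^2 - s^2) / (4*a)"
    using a unfolding r by (simp add: field_simps power2_eq_square)
  then show "a * (t - r1) * (t - r2) = a*t^2 - b*t + a"
    using a unfolding s2 by (simp add: power2_eq_square)
  show "0 < r1" "r1 < 1" "1 < r2"
    unfolding r using a s0 \<open>s < b\<close> \<open>b - 2*a < s\<close> b by (simp_all add: field_simps)
qed

lemma between_roots:
  fixes a r1 r2 t :: real
  assumes "0 < a" "r1 \<le> r2" "a * (t - r1) * (t - r2) < 0"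
  shows "r1 < t" "t < r2"
proof -
  have "a * ((t - r1) * (t - r2)) < 0" using assms(3) by (simp add: mult.assoc)
  then have "(t - r1) * (t - r2) < 0" using assms(1) by (simp add: mult_less_0_iff)
  then show "r1 < t" "t < r2" using assms(2) by (auto simp: mult_less_0_iff)
qed

lemma quadratic_root_formula:
  fixes a b c d :: complex
  assumes "a \<noteq> 0" "d^2 = b^2 - 4*a*c"
  shows "a * ((-b + d)/(2*a))^2 + b * ((-b + d)/(2*a)) + c = 0"
proof -
  have "a * ((-b + d)/(2*a))^2 + b * ((-b + d)/(2*a)) + c = (d^2 - (b^2 - 4*a*c)) / (4*a)"
    using assms(1) by (simp add: field_simps power2_eq_square)
  then show ?thesis using assms(2) by simp
qed

lemma quadratic_roots_vieta:
  fixes a b c d :: complex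
  assumes "a \<noteq> 0" "d^2 = b^2 - 4*a*c"
  shows "((-b + d)/(2*a)) * ((-b - d)/(2*a)) = c/a" "((-b + d)/(2*a)) + ((-b - d)/(2*a)) = -b/a"
proof -
  have "((-b + d)/(2*a)) * ((-b - d)/(2*a)) = (b^2 - d^2)/(4*a^2)"
    using assms(1) by (simp add: field_simps power2_eq_square)
  also have "b^2 - d^2 = 4*a*c" using assms(2) by simp
  finally show "((-b + d)/(2*a)) * ((-b - d)/(2*a)) = c/a"
    using assms(1) by (simp add: field_simps power2_eq_square)
  show "((-b + d)/(2*a)) + ((-b - d)/(2*a)) = -b/a"
    using assms(1) by (simp add: field_simps)
qed

lemma quadratic_root_cases:
  fixes a b c w r1 r2 :: complex
  assumes "a \<noteq> 0" "r1 * r2 = c/a" "r1 + r2 = -b/a" "a*w^2 + b*w + c = 0"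
  shows "w = r1 \<or> w = r2"
proof -
  have "a * ((w - r1) * (w - r2)) = a*w^2 - a*(r1 + r2)*w + a*(r1*r2)"
    by (simp add: algebra_simps power2_eq_square)
  also have "\<dots> = a*w^2 + b*w + c" using assms(1-3) by simp
  finally have "a * ((w - r1) * (w - r2)) = 0" using assms(4) by simp
  then show ?thesis using assms(1) by auto
qed

text \<open>The left-hand side has the shape of the definitions of X0 and Y0.\<close>

lemma min_norm_root_eq:
  fixes a b c r :: complex
  assumes "a \<noteq> 0" "a*r^2 + b*r + c = 0" "r \<noteq> 0" "cmod r < cmod (c/(a*r))"
  shows "(let r1 = (-b + csqrt (b^2 - 4*a*c))/(2*a); r2 = (-b - csqrt (b^2 - 4*a*c))/(2*a)
          in if cmod r1 \<le> cmod r2 then r1 else r2) = r"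
proof -
  define r1 where "r1 = (-b + csqrt (b^2 - 4*a*c))/(2*a)"
  define r2 where "r2 = (-b - csqrt (b^2 - 4*a*c))/(2*a)"
  have d: "(csqrt (b^2 - 4*a*c))^2 = b^2 - 4*a*c" by simp
  have p: "r1 * r2 = c/a" and s: "r1 + r2 = -b/a"
    using quadratic_roots_vieta[OF assms(1) d] by (simp_all add: r1_def r2_def)
  have "r = r1 \<or> r = r2" by (rule quadratic_root_cases[OF assms(1) p s assms(2)])
  then have "(if cmod r1 \<le> cmod r2 then r1 else r2) = r"
  proof
    assume "r = r1"
    then have "r2 = c/(a*r)" using p assms(1,3) by (simp add: field_simps)
    then show ?thesis using \<open>r = r1\<close> assms(4) by simp
  next
    assume "r = r2"
    then have "r1 = c/(a*r)" using p assms(1,3) by (simp add: field_simps)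
    then show ?thesis using \<open>r = r2\<close> assms(4) by simp
  qed
  then show ?thesis by (simp only: Let_def r1_def r2_def)
qed

lemma norm_sq_root_real_quadratic:
  fixes w :: complex and a b c :: real
  assumes "a > 0" "b^2 - 4*a*c \<le> 0" "of_real a * w^2 + of_real b * w + of_real c = 0"
  shows "(cmod w)^2 = c / a"
proof -
  obtain u v where w: "w = Complex u v" by (cases w)
  have re: "a*(u^2 - v^2) + b*u + c = 0" and im: "v * (2*a*u + b) = 0"
    using arg_cong[OF assms(3), of Re] arg_cong[OF assms(3), of Im]
    by (simp_all add: w power2_eq_square algebra_simps)
  have m: "(cmod w)^2 = u^2 + v^2" by (simp add: w cmod_def)
  show ?thesis
  proof (cases "v = 0")
    case True
    then have q: "a*u^2 + b*u = -c" using re by simp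
    have "(2*a*u + b)^2 = 4*a*(a*u^2 + b*u) + b^2" by (simp add: algebra_simps power2_eq_square)
    also have "\<dots> = b^2 - 4*a*c" using q by simp
    finally have "(2*a*u + b)^2 \<le> 0" using assms(2) by simp
    then have "2*a*u + b = 0" by simp
    then have "b = -2*a*u" by simp
    then have "c = a*u^2" using q by (simp add: algebra_simps power2_eq_square)
    then show ?thesis using m True assms(1) by simp
  next
    case False
    then have "b = -2*a*u" using im by simp
    then have "a*(u^2 + v^2) = c" using re by (simp add: algebra_simps power2_eq_square)
    then show ?thesis using m assms(1) by (simp add: field_simps)
  qed
qed

lemma real_quadratic_complex_root:
  fixes a b c s :: real
  assumes "a \<noteq> 0" "b^2 - 4*a*c \<le> 0" "s^2 = 1"
  shows "of_real a * ((of_real (-b) - of_real s * \<i> * of_real (sqrt (-(b^2 - 4*a*c)))) / of_real (2*a))^2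
      + of_real b * ((of_real (-b) - of_real s * \<i> * of_real (sqrt (-(b^2 - 4*a*c)))) / of_real (2*a))
      + of_real c = 0"
proof -
  define d where "d = - of_real s * \<i> * complex_of_real (sqrt (-(b^2 - 4*a*c)))"
  have "d^2 = (complex_of_real s)^2 * - ((complex_of_real (sqrt (-(b^2 - 4*a*c))))^2)"
    by (simp add: d_def power_mult_distrib)
  also have "(complex_of_real (sqrt (-(b^2 - 4*a*c))))^2 = complex_of_real (-(b^2 - 4*a*c))"
    using assms(2) by (simp flip: of_real_power)
  also have "(complex_of_real s)^2 = 1" using assms(3) by (metis of_real_1 of_real_power)
  finally have "d^2 = (of_real b)^2 - 4 * of_real a * of_real c" by simp
  from quadratic_root_formula[OF _ this] assms(1) show ?thesis by (simp add: d_def)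
qed

lemma pm_root_if_Re_norm:
  fixes a b c :: real and w :: complex
  assumes "a > 0" "Re w = -b/(2*a)" "(cmod w)^2 = c/a"
  shows "b^2 - 4*a*c \<le> 0"
    and "\<exists>s\<in>{1,-1}. (of_real (-b) - of_real s * \<i> * of_real (sqrt (-(b^2 - 4*a*c)))) / of_real (2*a) = w"
proof -
  have "(Im w)^2 = c/a - (b/(2*a))^2"
    using assms(2,3) by (simp add: cmod_power2 power2_minus)
  then have d: "-(b^2 - 4*a*c) = (2*a*\<bar>Im w\<bar>)^2"
    using assms(1) by (simp add: power_mult_distrib field_simps power2_eq_square)
  then show "b^2 - 4*a*c \<le> 0" using zero_le_power2[of "2*a*\<bar>Im w\<bar>"] by linarith
  have sq: "sqrt (-(b^2 - 4*a*c)) = 2*a*\<bar>Im w\<bar>" unfolding d using assms(1) by simp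
  define s :: real where "s = (if Im w \<ge> 0 then -1 else 1)"
  have "(of_real (-b) - of_real s * \<i> * of_real (sqrt (-(b^2 - 4*a*c)))) / of_real (2*a) = w"
    unfolding sq using assms(1,2)
    by (simp add: complex_eq_iff Re_divide_of_real Im_divide_of_real s_def)
  moreover have "s \<in> {1,-1}" by (simp add: s_def)
  ultimately show "\<exists>s\<in>{1,-1}. (of_real (-b) - of_real s * \<i> * of_real (sqrt (-(b^2 - 4*a*c)))) / of_real (2*a) = w"
    by blast
qed

lemma real_if_eq_scaled_square:
  fixes y :: complex and t :: real
  assumes "y = of_real t * (y + 1)^2" "0 \<le> t" "t < 1/4"
  shows "Im y = 0"
proof (rule ccontr)
  assume "Im y \<noteq> 0"
  obtain a b where y: "y = Complex a b" by (cases y)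
  have b: "b \<noteq> 0" using \<open>Im y \<noteq> 0\<close> by (simp add: y)
  have re: "a = t*(a+1)^2 - t*b^2" and im: "(t*(2*(a+1)) - 1) * b = 0"
    using arg_cong[OF assms(1), of Re] arg_cong[OF assms(1), of Im]
    by (simp_all add: y power2_eq_square algebra_simps)
  have 1: "t*(2*(a+1)) = 1" using im b by simp
  then have "t > 0" using assms(2) by (cases "t = 0") auto
  have "a + 1 > 2"
  proof (rule ccontr)
    assume "\<not> a + 1 > 2"
    then have "t*(2*(a+1)) \<le> t * 4" using \<open>t > 0\<close> by (intro mult_left_mono) auto
    then show False using 1 assms(3) by simp
  qed
  have "t*(a+1)^2 = (t*(2*(a+1)))*(a+1)/2" by (simp add: power2_eq_square algebra_simps)
  also have "\<dots> = (a+1)/2" using 1 by (simp only: mult_1)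
  finally have "t*b^2 = (1 - a)/2" using re by simp
  moreover have "t*b^2 \<ge> 0" using \<open>t > 0\<close> by simp
  ultimately show False using \<open>a + 1 > 2\<close> by simp
qed

text \<open>For non-real y the two roots in x of the kernel have distinct moduli: in case of a tie,
  u = r1^2 y lies on the unit circle, and the relations between the roots force
  y = 2(1 + Re u) z^2 (y+1)^2 with 2(1 + Re u) z^2 < 1/4.\<close>

lemma kernel_roots_norm_neq:
  fixes y r1 r2 :: complex and z :: real
  assumes "Im y \<noteq> 0" "0 < z" "z < 1/4" "r1 * r2 = 1/y" "r1 + r2 = 1/(of_real z * (y + 1))"
  shows "cmod r1 \<noteq> cmod r2"
proof
  assume eq: "cmod r1 = cmod r2"
  have y0: "y \<noteq> 0" and y1: "y + 1 \<noteq> 0" using assms(1) by (auto simp: complex_eq_iff)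
  have r10: "r1 \<noteq> 0" using assms(4) y0 by auto
  define u where "u = r1^2 * y"
  have "cmod u = cmod (r1 * r2 * y)" using eq by (simp add: u_def norm_mult power2_eq_square)
  also have "\<dots> = 1" using assms(4) y0 by simp
  finally have u1: "cmod u = 1" .
  have r2: "r2 = 1/(y*r1)" using assms(4) r10 y0 by (simp add: field_simps)
  have "r2^2 * y = 1/u" unfolding r2 u_def using r10 y0 by (simp add: field_simps power2_eq_square)
  also have "1/u = cnj u"
  proof -
    have "u * cnj u = 1" using complex_norm_square[of u] u1 by simp
    moreover have "u \<noteq> 0" using u1 by auto
    ultimately show ?thesis by (simp add: field_simps)
  qed
  finally have "(r1 + r2)^2 * y = u + 2*(r1*r2*y) + cnj u"
    by (simp add: u_def algebra_simps power2_eq_square)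
  also have "\<dots> = of_real (2 + 2 * Re u)"
    using assms(4) y0 by (simp add: complex_add_cnj)
  finally have A: "(r1 + r2)^2 * y = of_real (2 + 2 * Re u)" .
  have "(r1 + r2)^2 * y = y / (of_real (z^2) * (y+1)^2)"
    unfolding assms(5) by (simp add: power2_eq_square field_simps)
  with A have Y: "y = of_real ((2 + 2 * Re u) * z^2) * (y + 1)^2"
    using y1 assms(2) by (simp add: field_simps)
  have "\<bar>Re u\<bar> \<le> 1" using u1 abs_Re_le_cmod[of u] by simp
  then have "0 \<le> (2 + 2 * Re u) * z^2" "(2 + 2 * Re u) * z^2 \<le> 4 * z^2"
    by (auto intro: mult_right_mono)
  moreover have "z^2 < 1/16"
    using assms(2,3) power_strict_mono[of z "1/4" 2] by (simp add: power2_eq_square)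
  ultimately have "Im y = 0" using real_if_eq_scaled_square[OF Y] by simp
  then show False using assms(1) by simp
qed

lemma kernel_sym:
  "atil z y * x^2 + btil z y * x + ctil z y = ak z x * y^2 + bk z x * y + ck z (x :: 'a::real_field)"
  by (simp add: atil_def btil_def ctil_def ak_def bk_def ck_def algebra_simps power2_eq_square)

lemma pos_on_connected_if_nonzero:
  fixes g :: "'a::topological_space \<Rightarrow> real"
  assumes "connected S" "continuous_on S g" "\<forall>x\<in>S. g x \<noteq> 0" "a \<in> S" "g a > 0" "x \<in> S"
  shows "g x > 0"
proof (rule ccontr)
  assume "\<not> g x > 0"
  then have "g x < 0" using assms(3,6) by force
  have "connected (g ` S)" by (rule connected_continuous_image[OF assms(2,1)])
  then have "0 \<in> g ` S" unfolding connected_iff_interval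
    using assms(4,5,6) \<open>g x < 0\<close> by (meson image_eqI less_imp_le)
  then show False using assms(3) by auto
qed

lemma holomorphic_on_imp_isCont: "f holomorphic_on S \<Longrightarrow> open S \<Longrightarrow> x \<in> S \<Longrightarrow> isCont f x"
  by (intro field_differentiable_imp_continuous_at holomorphic_on_imp_differentiable_at)

lemma open_Compl_of_real_image:
  "open (- (complex_of_real ` {a..b}))" "open (- (complex_of_real ` {a..}))"
proof -
  have "complex_of_real ` {a..b} = {w. Im w = 0 \<and> a \<le> Re w \<and> Re w \<le> b}"
    "complex_of_real ` {a..} = {w. Im w = 0 \<and> a \<le> Re w}"
    by (auto simp: complex_eq_iff intro!: image_eqI[where x="Re w" for w])
  then show "open (- (complex_of_real ` {a..b}))" "open (- (complex_of_real ` {a..}))"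
    by (auto intro!: open_Compl closed_Collect_conj closed_Collect_eq closed_Collect_le continuous_intros)
qed

lemma connected_component_subset_open_cover:
  fixes A B C :: "'a::topological_space set"
  assumes "open A" "open B" "A \<inter> B = {}" "- C \<subseteq> A \<union> B" "x \<in> A"
  shows "connected_component_set (- C) x \<subseteq> A"
proof (cases "x \<in> - C")
  case False
  then have "connected_component_set (- C) x = {}" using connected_component_eq_empty by blast
  then show ?thesis by (simp only: empty_subsetI)
next
  case True
  let ?K = "connected_component_set (- C) x"
  have "x \<in> ?K" using True by simp
  have "?K \<subseteq> - C" by (rule connected_component_subset)
  then have "A \<inter> ?K = {} \<or> B \<inter> ?K = {}"
    using connectedD[OF connected_connected_component assms(1,2)] assms(3,4) by blast
  then have "B \<inter> ?K = {}" using \<open>x \<in> ?K\<close> assms(5) by blast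
  then show ?thesis using \<open>?K \<subseteq> - C\<close> assms(4) by blast
qed

lemma closure_connected_component_subset:
  fixes \<phi> \<psi> :: "'a::topological_space \<Rightarrow> real"
  assumes "continuous_on UNIV \<phi>" "continuous_on UNIV \<psi>"
    and "\<And>w. 1 < \<psi> w \<Longrightarrow> \<phi> w = 0 \<Longrightarrow> w \<in> C" "\<And>w. \<psi> w = 1 \<Longrightarrow> \<phi> w < 0" "\<psi> x < 1"
  shows "closure (connected_component_set (- C) x) \<subseteq> {w. \<phi> w \<le> 0 \<or> \<psi> w \<le> 1}"
proof -
  define A where "A = {w. \<phi> w < 0} \<union> {w. \<psi> w < 1}"
  define B where "B = {w. 1 < \<psi> w} \<inter> {w. 0 < \<phi> w}"
  have "open A" unfolding A_def by (intro open_Un open_Collect_less assms(1,2) continuous_on_const)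
  moreover have "open B" unfolding B_def by (intro open_Int open_Collect_less assms(1,2) continuous_on_const)
  moreover have "A \<inter> B = {}" by (auto simp: A_def B_def)
  moreover have "- C \<subseteq> A \<union> B"
  proof
    fix w assume "w \<in> - C"
    show "w \<in> A \<union> B"
    proof (cases "\<phi> w < 0 \<or> \<psi> w < 1")
      case False
      then have "\<psi> w \<noteq> 1" using assms(4) by force
      then have "1 < \<psi> w" using False by simp
      then have "\<phi> w \<noteq> 0" using assms(3) \<open>w \<in> - C\<close> by blast
      then show ?thesis using False \<open>1 < \<psi> w\<close> by (simp add: B_def)
    qed (auto simp: A_def)
  qed
  moreover have "x \<in> A" using assms(5) by (simp add: A_def)
  ultimately have "connected_component_set (- C) x \<subseteq> A"
    by (rule connected_component_subset_open_cover)
  moreover have "closed {w. \<phi> w \<le> 0 \<or> \<psi> w \<le> 1}"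
    unfolding Collect_disj_eq by (intro closed_Un closed_Collect_le assms(1,2) continuous_on_const)
  moreover have "A \<subseteq> {w. \<phi> w \<le> 0 \<or> \<psi> w \<le> 1}" by (auto simp: A_def)
  ultimately show ?thesis by (meson closure_minimal order_trans)
qed

section \<open>Branch points\<close>

locale gessel_param =
  fixes z :: real
  assumes z_pos: "0 < z" and z_less: "z < 1/4"
begin

text \<open>The branch points come in reciprocal pairs: y2, y3 are the roots of 4z^2(t+1)^2 - t, the
  non-trivial factor of dtil, and x1, x4 and x2, x3 those of the two factors of dk.\<close>

lemma y_branch_points:
  shows y_factor: "4*z^2*(t - y2 z)*(t - y3 z) = 4*z^2*(t+1)^2 - t"
    and y2_pos: "0 < y2 z" and y2_less_1: "y2 z < 1" and y3_greater_1: "1 < y3 z"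
proof -
  have a: "0 < 4*z^2" using z_pos by simp
  have "z*z < (1/4)*(1/4)" using z_pos z_less by (intro mult_strict_mono) auto
  then have b: "2*(4*z^2) < 1 - 8*z^2" by (simp add: power2_eq_square)
  have disc: "(1 - 8*z^2)^2 - 4*(4*z^2)^2 = 1 - 16*z^2" by algebra
  have y: "y2 z = (1 - 8*z^2 - sqrt (1 - 16*z^2)) / (2*(4*z^2))"
    "y3 z = (1 - 8*z^2 + sqrt (1 - 16*z^2)) / (2*(4*z^2))"
    by (simp_all add: y2_def y3_def)
  note r = reciprocal_quadratic_roots[OF a b, unfolded disc, folded y]
  show "0 < y2 z" "y2 z < 1" "1 < y3 z" using r(2-4) .
  show "4*z^2*(t - y2 z)*(t - y3 z) = 4*z^2*(t+1)^2 - t"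
    unfolding r(1) by (simp add: algebra_simps power2_eq_square)
qed

lemma x23_branch_points:
  shows x23_factor: "z*(t - x2 z)*(t - x3 z) = z*t^2 - (1-2*z)*t + z"
    and x2_pos: "0 < x2 z" and x2_less_1: "x2 z < 1" and x3_greater_1: "1 < x3 z"
proof -
  have b: "2*z < 1 - 2*z" using z_less by simp
  have disc: "(1 - 2*z)^2 - 4*z^2 = 1 - 4*z" by algebra
  have x: "x2 z = (1 - 2*z - sqrt (1 - 4*z)) / (2*z)" "x3 z = (1 - 2*z + sqrt (1 - 4*z)) / (2*z)"
    by (simp_all add: x2_def x3_def)
  note r = reciprocal_quadratic_roots[OF z_pos b, unfolded disc, folded x]
  show "z*(t - x2 z)*(t - x3 z) = z*t^2 - (1-2*z)*t + z" "0 < x2 z" "x2 z < 1" "1 < x3 z"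
    using r by simp_all
qed

lemma x14_branch_points:
  shows x14_factor: "z*(t - x1 z)*(t - x4 z) = z*t^2 - (1+2*z)*t + z"
    and x1_pos: "0 < x1 z" and x1_less_1: "x1 z < 1" and x4_greater_1: "1 < x4 z"
proof -
  have b: "2*z < 1 + 2*z" by simp
  have disc: "(1 + 2*z)^2 - 4*z^2 = 1 + 4*z" by algebra
  have x: "x1 z = (1 + 2*z - sqrt (1 + 4*z)) / (2*z)" "x4 z = (1 + 2*z + sqrt (1 + 4*z)) / (2*z)"
    by (simp_all add: x1_def x4_def)
  note r = reciprocal_quadratic_roots[OF z_pos b, unfolded disc, folded x]
  show "z*(t - x1 z)*(t - x4 z) = z*t^2 - (1+2*z)*t + z" "0 < x1 z" "x1 z < 1" "1 < x4 z"
    using r by simp_all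
qed

lemma y2_less_y3: "y2 z < y3 z"
  using y2_less_1 y3_greater_1 by simp

text \<open>The two quadratics factoring the discriminant in x differ by 4zt, so the roots of one
  interlace with those of the other.\<close>

lemma x_roots_interlace: "x1 z < x2 z" "x2 z \<le> x3 z" "x3 z < x4 z"
proof -
  show "x2 z \<le> x3 z" using x2_less_1 x3_greater_1 by simp
  have "x1 z \<le> x4 z" using x1_less_1 x4_greater_1 by simp
  moreover have "z*(t - x1 z)*(t - x4 z) < 0" if "t \<in> {x2 z, x3 z}" for t
  proof -
    have "0 < t" using that x2_pos x3_greater_1 by auto
    have "z*t^2 - (1+2*z)*t + z = (z*t^2 - (1-2*z)*t + z) - 4*z*t" by (simp add: algebra_simps)
    also have "z*t^2 - (1-2*z)*t + z = 0" using that x23_factor[of t] by auto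
    finally show ?thesis unfolding x14_factor using \<open>0 < t\<close> z_pos by simp
  qed
  ultimately show "x1 z < x2 z" "x3 z < x4 z"
    using between_roots[OF z_pos] by blast+
qed

lemma y3_large: "1 < 2*z*(1 + y3 z)"
proof -
  define t where "t = 1/(2*z) - 1"
  have "2 < 1/(2*z)" using z_pos z_less by (simp add: field_simps)
  have "4*z^2*(t+1)^2 = 1" using z_pos by (simp add: t_def power2_eq_square field_simps)
  then have "4*z^2*(t - y2 z)*(t - y3 z) < 0"
    unfolding y_factor using \<open>2 < 1/(2*z)\<close> by (simp add: t_def)
  then have "t < y3 z" using between_roots(2)[of "4*z^2" "y2 z" "y3 z" t] z_pos y2_less_y3 by simp
  then show ?thesis using z_pos by (simp add: t_def field_simps)
qed

lemma dtil_factor: "dtil z y = - 4 * of_real z^2 * y * (y - of_real (y2 z)) * (y - of_real (y3 z))"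
  for y :: "'a::real_field"
proof -
  have p: "y2 z * y3 z = 1" using y_factor[of 0] z_pos by (simp add: power2_eq_square)
  have "4*z^2*(y2 z + y3 z) = 4*z^2 + 4*z^2*(y2 z * y3 z) - 4*z^2*(1 - y2 z)*(1 - y3 z)"
    by (simp add: algebra_simps)
  also have "\<dots> = 1 - 8*z^2" using p y_factor[of 1] by simp
  finally have s: "4*z^2*(y2 z + y3 z) = 1 - 8*z^2" .
  have s': "4 * of_real z^2 * (of_real (y2 z) + of_real (y3 z)) = (1 - 8 * of_real z^2 :: 'a)"
    and p': "of_real (y2 z) * of_real (y3 z) = (1 :: 'a)"
    using arg_cong[OF s, of "of_real :: real \<Rightarrow> 'a"] arg_cong[OF p, of "of_real :: real \<Rightarrow> 'a"]
    by simp_all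
  have "- 4 * of_real z^2 * y * (y - of_real (y2 z)) * (y - of_real (y3 z))
      = - 4 * of_real z^2 * y * y^2 + y * (4 * of_real z^2 * (of_real (y2 z) + of_real (y3 z))) * y
        - 4 * of_real z^2 * y * (of_real (y2 z) * of_real (y3 z))"
    by (simp add: algebra_simps power2_eq_square)
  also have "\<dots> = dtil z y"
    unfolding s' p' by (simp add: dtil_def atil_def btil_def ctil_def algebra_simps power2_eq_square)
  finally show ?thesis by simp
qed

lemma dk_factor: "dk z x = (z*(x - x1 z)*(x - x4 z)) * (z*(x - x2 z)*(x - x3 z))"
  unfolding x14_factor x23_factor
  by (simp add: dk_def ak_def bk_def ck_def algebra_simps power2_eq_square)

lemma dk_nonpos:
  assumes "x1 z \<le> x \<and> x \<le> x2 z \<or> x3 z \<le> x \<and> x \<le> x4 z"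
  shows "dk z x \<le> 0"
proof -
  have "x1 z \<le> x" "x \<le> x4 z" using assms x_roots_interlace by auto
  then have "z*(x - x1 z)*(x - x4 z) \<le> 0" using z_pos by (simp add: mult_nonneg_nonpos)
  moreover have "0 \<le> (x - x2 z)*(x - x3 z)"
    using assms x_roots_interlace(2) by (auto intro: mult_nonpos_nonpos)
  then have "0 \<le> z*(x - x2 z)*(x - x3 z)" using z_pos by (simp add: mult.assoc)
  ultimately show ?thesis unfolding dk_factor by (simp add: mult_nonpos_nonneg)
qed

lemma dtil_nonpos: "0 < y \<Longrightarrow> y \<le> y2 z \<Longrightarrow> dtil z y \<le> 0"
  unfolding dtil_factor using y2_less_y3 z_pos
  by (simp add: mult_nonneg_nonpos zero_le_mult_iff mult_le_0_iff)

section \<open>The branch Xb0 on the slit plane\<close>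

definition slit_domain :: "complex set" where
  "slit_domain = {w. Im w \<noteq> 0 \<or> (y2 z < Re w \<and> Re w < y3 z)}"

text \<open>Xb0 and Xb1 are the roots in x of the kernel as holomorphic functions of y on the slit
  domain, built from a holomorphic square root of the discriminant; Xb0 continues the paper's X0.\<close>

definition disc_sqrt :: "complex \<Rightarrow> complex" where
  "disc_sqrt y = - 2 * of_real z * csqrt y * csqrt (y - of_real (y2 z)) * csqrt (of_real (y3 z) - y)"

definition Xb0 :: "complex \<Rightarrow> complex" where
  "Xb0 y = (- btil z y + disc_sqrt y) / (2 * atil z y)"

definition Xb1 :: "complex \<Rightarrow> complex" where
  "Xb1 y = (- btil z y - disc_sqrt y) / (2 * atil z y)"

lemma disc_sqrt_sq: "(disc_sqrt y)^2 = dtil z y"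
proof -
  have "(disc_sqrt y)^2 = 4 * of_real z^2 * (csqrt y)^2 * (csqrt (y - of_real (y2 z)))^2
      * (csqrt (of_real (y3 z) - y))^2"
    by (simp add: disc_sqrt_def power_mult_distrib)
  then show ?thesis by (simp add: dtil_factor algebra_simps)
qed

lemma slit_domain_open: "open slit_domain"
proof -
  have "slit_domain = - {w. Im w = 0 \<and> (Re w \<le> y2 z \<or> y3 z \<le> Re w)}"
    by (auto simp: slit_domain_def)
  moreover have "closed {w::complex. Im w = 0 \<and> (Re w \<le> y2 z \<or> y3 z \<le> Re w)}"
    by (intro closed_Collect_conj closed_Collect_disj closed_Collect_eq closed_Collect_le continuous_intros)
  ultimately show ?thesis by (simp add: open_Compl)
qed

text \<open>The slit domain is star-shaped with respect to the midpoint of the gap (y2, y3).\<close>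

lemma slit_domain_connected: "connected slit_domain"
proof (rule starlike_imp_connected)
  define m where "m = complex_of_real ((y2 z + y3 z)/2)"
  define gap where "gap = {w. Im w \<ge> 0} \<inter> {w. Im w \<le> 0} \<inter> {w. Re w > y2 z} \<inter> {w. Re w < y3 z}"
  have gap: "convex gap" "gap \<subseteq> slit_domain" "m \<in> gap"
    using y2_less_y3 unfolding gap_def m_def slit_domain_def
    by (auto intro!: convex_Int convex_halfspace_Im_ge convex_halfspace_Im_le
        convex_halfspace_Re_gt convex_halfspace_Re_lt)
  have "closed_segment m x \<subseteq> slit_domain" if x: "x \<in> slit_domain" for x
  proof (cases "Im x = 0")
    case True
    then have "x \<in> gap" using x by (auto simp: gap_def slit_domain_def)
    then show ?thesis using gap closed_segment_subset by blast
  next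
    case False
    show ?thesis
    proof
      fix w assume "w \<in> closed_segment m x"
      then obtain t where t: "0 \<le> t" "t \<le> 1" and w: "w = (1 - t) *\<^sub>R m + t *\<^sub>R x"
        by (auto simp: closed_segment_def)
      show "w \<in> slit_domain"
      proof (cases "t = 0")
        case True
        then show ?thesis using w gap by auto
      next
        case False
        then show ?thesis using w \<open>Im x \<noteq> 0\<close> by (simp add: slit_domain_def m_def)
      qed
    qed
  qed
  then show "starlike slit_domain" unfolding starlike_def using gap by blast
qed

lemma slit_domain_memD:
  assumes "y \<in> slit_domain"
  shows "y \<notin> \<real>\<^sub>\<le>\<^sub>0" "y - of_real (y2 z) \<notin> \<real>\<^sub>\<le>\<^sub>0" "of_real (y3 z) - y \<notin> \<real>\<^sub>\<le>\<^sub>0"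
    and "y \<noteq> 0" "y + 1 \<noteq> 0" "atil z y \<noteq> 0" "\<not> (Im y = 0 \<and> y3 z \<le> Re y)"
proof -
  show "y \<notin> \<real>\<^sub>\<le>\<^sub>0" "y - of_real (y2 z) \<notin> \<real>\<^sub>\<le>\<^sub>0" "of_real (y3 z) - y \<notin> \<real>\<^sub>\<le>\<^sub>0"
    "\<not> (Im y = 0 \<and> y3 z \<le> Re y)" "y \<noteq> 0" "y + 1 \<noteq> 0"
    using assms y2_pos by (auto simp: slit_domain_def complex_nonpos_Reals_iff complex_eq_iff)
  then show "atil z y \<noteq> 0" using z_pos by (simp add: atil_def)
qed

lemma disc_sqrt_holomorphic: "disc_sqrt holomorphic_on slit_domain"
  unfolding disc_sqrt_def using slit_domain_memD by (intro holomorphic_intros) auto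

lemma Xb_holomorphic: "Xb0 holomorphic_on slit_domain" "Xb1 holomorphic_on slit_domain"
  unfolding Xb0_def Xb1_def btil_def atil_def using slit_domain_memD(4,5) z_pos
  by (auto intro!: holomorphic_intros disc_sqrt_holomorphic)

lemma Xb_vieta:
  assumes "y \<in> slit_domain"
  shows "Xb0 y * Xb1 y = ctil z y / atil z y" "Xb0 y + Xb1 y = - btil z y / atil z y"
proof -
  have "(disc_sqrt y)^2 = btil z y ^2 - 4 * atil z y * ctil z y"
    using disc_sqrt_sq by (simp add: dtil_def)
  note v = quadratic_roots_vieta[OF slit_domain_memD(6)[OF assms] this]
  show "Xb0 y * Xb1 y = ctil z y / atil z y" "Xb0 y + Xb1 y = - btil z y / atil z y"
    unfolding Xb0_def Xb1_def using v by simp_all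
qed

lemma Xb0_root:
  "y \<in> slit_domain \<Longrightarrow> atil z y * (Xb0 y)^2 + btil z y * Xb0 y + ctil z y = 0"
  unfolding Xb0_def using quadratic_root_formula[of "atil z y" "disc_sqrt y" "btil z y" "ctil z y"]
    slit_domain_memD(6) disc_sqrt_sq by (simp add: dtil_def)

lemma Xb_prod_sum:
  assumes "y \<in> slit_domain"
  shows "Xb0 y * Xb1 y = 1 / y" "Xb0 y + Xb1 y = 1 / (of_real z * (y + 1))"
proof -
  have nz: "of_real z * y * (y + 1) \<noteq> 0"
    using slit_domain_memD(6)[OF assms] by (simp add: atil_def)
  then have "of_real z * (y + 1) \<noteq> 0" "y \<noteq> 0" by auto
  with nz show "Xb0 y * Xb1 y = 1 / y" "Xb0 y + Xb1 y = 1 / (of_real z * (y + 1))"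
    unfolding Xb_vieta[OF assms] by (simp_all add: atil_def btil_def ctil_def field_simps)
qed

lemma Xb_of_real:
  assumes "y2 z < r" "r < y3 z"
  defines "\<sigma> \<equiv> 2 * z * sqrt r * sqrt (r - y2 z) * sqrt (y3 z - r)" and "D \<equiv> 2*z*r*(r+1)"
  shows "Xb0 (of_real r) = of_real ((r - \<sigma>) / D)" "Xb1 (of_real r) = of_real ((r + \<sigma>) / D)"
proof -
  have "0 < r" using assms y2_pos by simp
  then have "disc_sqrt (of_real r) = - of_real \<sigma>"
    using assms by (simp add: disc_sqrt_def \<sigma>_def flip: of_real_diff)
  moreover have "2 * atil z (complex_of_real r) = of_real D" "- btil z (complex_of_real r) = of_real r"
    by (simp_all add: atil_def btil_def D_def)
  ultimately show "Xb0 (of_real r) = of_real ((r - \<sigma>) / D)" "Xb1 (of_real r) = of_real ((r + \<sigma>) / D)"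
    unfolding Xb0_def Xb1_def by simp_all
qed

lemma norm_Xb0_less: assumes "y \<in> slit_domain" shows "cmod (Xb0 y) < cmod (Xb1 y)"
proof -
  let ?g = "\<lambda>y. cmod (Xb1 y) - cmod (Xb0 y)"
  have on_gap: "?g (of_real r) > 0" if "y2 z < r" "r < y3 z" for r
  proof -
    define \<sigma> where "\<sigma> = 2 * z * sqrt r * sqrt (r - y2 z) * sqrt (y3 z - r)"
    define D where "D = 2*z*r*(r+1)"
    have "0 < r" using that y2_pos by simp
    then have "0 < D" "0 < \<sigma>" using that z_pos by (simp_all add: D_def \<sigma>_def)
    then have "\<bar>(r - \<sigma>) / D\<bar> < \<bar>(r + \<sigma>) / D\<bar>"
      using \<open>0 < r\<close> by (simp add: abs_divide divide_strict_right_mono)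
    then show ?thesis unfolding Xb_of_real[OF that, folded \<sigma>_def D_def] norm_of_real by simp
  qed
  have cont: "continuous_on slit_domain ?g"
    using Xb_holomorphic by (intro continuous_intros holomorphic_on_imp_continuous_on)
  have nz: "\<forall>y\<in>slit_domain. ?g y \<noteq> 0"
  proof
    fix y assume y: "y \<in> slit_domain"
    show "?g y \<noteq> 0"
    proof (cases "Im y = 0")
      case False
      then show ?thesis using kernel_roots_norm_neq[OF False z_pos z_less Xb_prod_sum[OF y]] by simp
    next
      case True
      then have "y = of_real (Re y)" "y2 z < Re y" "Re y < y3 z"
        using y by (auto simp: slit_domain_def complex_eq_iff)
      then show ?thesis using on_gap by fastforce
    qed
  qed
  have mid: "of_real ((y2 z + y3 z)/2) \<in> slit_domain"
    using y2_less_y3 by (simp add: slit_domain_def)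
  have "?g (of_real ((y2 z + y3 z)/2)) > 0"
    by (rule on_gap) (use y2_less_y3 in auto)
  from pos_on_connected_if_nonzero[OF slit_domain_connected cont nz mid this assms]
  show ?thesis by simp
qed

lemma norm_Xb0_sq_mult_less: assumes "y \<in> slit_domain" shows "cmod (Xb0 y)^2 * cmod y < 1"
proof -
  have "cmod (Xb0 y) * cmod (Xb1 y) * cmod y = 1"
    using Xb_prod_sum(1)[OF assms] slit_domain_memD(4)[OF assms] by (simp flip: norm_mult)
  moreover have "Xb0 y \<noteq> 0" using Xb_prod_sum(1)[OF assms] slit_domain_memD(4)[OF assms] by auto
  then have "cmod (Xb0 y) * cmod (Xb0 y) * cmod y < cmod (Xb0 y) * cmod (Xb1 y) * cmod y"
    using norm_Xb0_less[OF assms] slit_domain_memD(4)[OF assms] by simp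
  ultimately show ?thesis by (simp add: power2_eq_square)
qed

text \<open>If Xb0 y were a point x of [x3, x4], then y would be a root of the kernel in y with
  non-positive discriminant, hence |y| = 1/x, contradicting |Xb0 y|^2 |y| < 1.\<close>

lemma Xb0_notin_cut: assumes "y \<in> slit_domain" shows "Xb0 y \<notin> complex_of_real ` {x3 z..x4 z}"
proof
  assume "Xb0 y \<in> complex_of_real ` {x3 z..x4 z}"
  then obtain x where x: "Xb0 y = of_real x" "x3 z \<le> x" "x \<le> x4 z" by auto
  have "x > 1" using x x3_greater_1 by simp
  have "ak z (of_real x) * y^2 + bk z (of_real x) * y + ck z (of_real x) = 0"
    using Xb0_root[OF assms] kernel_sym x(1) by metis
  then have "of_real (ak z x) * y^2 + of_real (bk z x) * y + of_real (ck z x) = 0"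
    by (simp add: ak_def bk_def ck_def)
  moreover have "(bk z x)^2 - 4 * ak z x * ck z x \<le> 0"
    using dk_nonpos x(2,3) by (simp add: dk_def)
  moreover have "ak z x > 0" using z_pos \<open>x > 1\<close> by (simp add: ak_def)
  ultimately have "(cmod y)^2 = ck z x / ak z x" using norm_sq_root_real_quadratic by blast
  then have "(cmod y)^2 = (1/x)^2" using z_pos by (simp add: ak_def ck_def power_divide)
  then have "cmod y = 1/x" using \<open>x > 1\<close> by (simp add: power2_eq_iff_nonneg)
  then have "x^2 * (1/x) < 1" using norm_Xb0_sq_mult_less[OF assms] x(1) \<open>x > 1\<close> by simp
  then show False using \<open>x > 1\<close> by (simp add: power2_eq_square)
qed

lemma norm_Xb0_of_real_less_1:
  assumes "y2 z < r" "x2 z < r" "r < 1"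
  shows "cmod (Xb0 (of_real r)) < 1"
proof -
  have r3: "r < y3 z" "r < x3 z" using assms y3_greater_1 x3_greater_1 by auto
  have "0 < r" using assms y2_pos by simp
  define \<sigma> where "\<sigma> = 2 * z * sqrt r * sqrt (r - y2 z) * sqrt (y3 z - r)"
  define D where "D = 2*z*r*(r+1)"
  have "D > 0" "\<sigma> > 0" unfolding D_def \<sigma>_def using z_pos \<open>0 < r\<close> assms r3 by simp_all
  have "\<sigma>^2 = - r * (4*z^2*(r - y2 z)*(r - y3 z))"
    unfolding \<sigma>_def using assms r3 \<open>0 < r\<close> by (simp add: power_mult_distrib algebra_simps)
  also have "\<dots> = r^2 - 4*z^2*r*(r+1)^2"
    unfolding y_factor by (simp add: algebra_simps power2_eq_square)
  finally have s2: "\<sigma>^2 = r^2 - 4*z^2*r*(r+1)^2" .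
  then have "\<sigma>^2 < r^2" using z_pos \<open>0 < r\<close> by simp
  then have "\<sigma> < r" using \<open>0 < r\<close> by (simp add: power2_less_imp_less)
  have "r - \<sigma> < D"
  proof (cases "r - D \<le> 0")
    case False
    have "(r - D)^2 - \<sigma>^2 = 4*z*r*(r+1)*(z*(r+1)^2 - r)"
      unfolding s2 D_def by (simp add: algebra_simps power2_eq_square)
    also have "z*(r+1)^2 - r = z*(r - x2 z)*(r - x3 z)"
      unfolding x23_factor by (simp add: algebra_simps power2_eq_square)
    also have "4*z*r*(r+1)*(z*(r - x2 z)*(r - x3 z)) < 0"
      using z_pos \<open>0 < r\<close> assms r3 by (simp add: mult_pos_neg)
    finally have "(r - D)^2 < \<sigma>^2" by simp
    then have "r - D < \<sigma>" using \<open>\<sigma> > 0\<close> by (simp add: power2_less_imp_less)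
    then show ?thesis by simp
  qed (use \<open>\<sigma> > 0\<close> in simp)
  then have "\<bar>(r - \<sigma>)/D\<bar> < 1" using \<open>\<sigma> < r\<close> \<open>D > 0\<close> by (simp add: abs_divide)
  then show ?thesis
    unfolding Xb_of_real(1)[OF assms(1) r3(1), folded \<sigma>_def D_def] norm_of_real .
qed

section \<open>The curves and their conjugate points\<close>

lemma X0pm_root:
  assumes "0 < y" "y \<le> y2 z" "s^2 = 1"
  shows "atil z (of_real y) * (X0pm s z y)^2 + btil z (of_real y) * X0pm s z y + ctil z (of_real y) = 0"
proof -
  have "atil z y \<noteq> 0" using assms z_pos by (simp add: atil_def)
  from real_quadratic_complex_root[OF this _ assms(3), of "btil z y" "ctil z y"] show ?thesis
    using dtil_nonpos[OF assms(1,2)]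
    by (simp add: X0pm_def atil_def btil_def ctil_def dtil_def)
qed

lemma Y0pm_root:
  assumes "x1 z \<le> x" "x \<le> x2 z" "s^2 = 1"
  shows "ak z (of_real x) * (Y0pm s z x)^2 + bk z (of_real x) * Y0pm s z x + ck z (of_real x) = 0"
proof -
  have "ak z x \<noteq> 0" using assms x1_pos z_pos by (simp add: ak_def)
  from real_quadratic_complex_root[OF this _ assms(3), of "bk z x" "ck z x"] show ?thesis
    using dk_nonpos assms(1,2)
    by (simp add: Y0pm_def ak_def bk_def ck_def dk_def)
qed

lemma norm_X0pm:
  assumes "0 < y" "y \<le> y2 z" "s^2 = 1"
  shows "(cmod (X0pm s z y))^2 = 1 / y"
proof -
  have "of_real (atil z y) * (X0pm s z y)^2 + of_real (btil z y) * X0pm s z y + of_real (ctil z y) = 0"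
    using X0pm_root[OF assms] by (simp add: atil_def btil_def ctil_def)
  moreover have "atil z y > 0" using assms z_pos by (simp add: atil_def)
  moreover have "(btil z y)^2 - 4 * atil z y * ctil z y \<le> 0"
    using dtil_nonpos[OF assms(1,2)] by (simp add: dtil_def)
  ultimately have "(cmod (X0pm s z y))^2 = ctil z y / atil z y"
    using norm_sq_root_real_quadratic by blast
  then show ?thesis using assms z_pos by (simp add: atil_def ctil_def)
qed

lemma norm_Y0pm:
  assumes "x1 z \<le> x" "x \<le> x2 z" "s^2 = 1"
  shows "cmod (Y0pm s z x) = 1 / x"
proof -
  have "x > 0" using assms x1_pos by simp
  have "of_real (ak z x) * (Y0pm s z x)^2 + of_real (bk z x) * Y0pm s z x + of_real (ck z x) = 0"
    using Y0pm_root[OF assms] by (simp add: ak_def bk_def ck_def)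
  moreover have "ak z x > 0" using \<open>x > 0\<close> z_pos by (simp add: ak_def)
  moreover have "(bk z x)^2 - 4 * ak z x * ck z x \<le> 0"
    using dk_nonpos assms(1,2) by (simp add: dk_def)
  ultimately have "(cmod (Y0pm s z x))^2 = ck z x / ak z x"
    using norm_sq_root_real_quadratic by blast
  then have "(cmod (Y0pm s z x))^2 = (1/x)^2" using \<open>x > 0\<close> z_pos by (simp add: ak_def ck_def power_divide)
  then show ?thesis using \<open>x > 0\<close> by (simp add: power2_eq_iff_nonneg)
qed

lemma cnj_X0pm: "cnj (X0pm s z y) = X0pm (-s) z y"
  by (simp add: X0pm_def)

lemma cnj_Y0pm: "cnj (Y0pm s z x) = Y0pm (-s) z x"
  by (simp add: Y0pm_def)

lemma Im_X0pm_nonzero: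
  assumes "0 < y" "y < y2 z" "s \<noteq> 0"
  shows "Im (X0pm s z y) \<noteq> 0"
proof -
  have "- dtil z y = 4*z^2*y*(y2 z - y)*(y3 z - y)"
    by (simp add: dtil_factor algebra_simps)
  also have "\<dots> > 0" using assms z_pos y2_less_y3 by simp
  finally have "- dtil z y > 0" .
  moreover have "atil z y > 0" using assms z_pos by (simp add: atil_def)
  ultimately show ?thesis using assms(3) unfolding X0pm_def by (simp add: Im_divide_of_real)
qed

lemma Y0_X0pm:
  assumes "0 < y" "y < y2 z" "s^2 = 1"
  shows "Y0 z (X0pm s z y) = of_real y"
proof -
  let ?t = "X0pm s z y"
  have m: "(cmod ?t)^2 = 1/y" using norm_X0pm[OF assms(1) _ assms(3)] assms(2) by simp
  then have "?t \<noteq> 0" using assms(1) by auto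
  then have "ak z ?t \<noteq> 0" using z_pos by (simp add: ak_def)
  moreover have "ak z ?t * (of_real y)^2 + bk z ?t * of_real y + ck z ?t = 0"
    using X0pm_root[OF assms(1) _ assms(3)] assms(2) kernel_sym[of z "of_real y" ?t] by simp
  moreover have "cmod (ck z ?t / (ak z ?t * of_real y)) = 1 / ((cmod ?t)^2 * y)"
    using assms(1) \<open>?t \<noteq> 0\<close> z_pos by (simp add: ak_def ck_def norm_divide norm_mult norm_power)
  then have "cmod (complex_of_real y) < cmod (ck z ?t / (ak z ?t * of_real y))"
    using m assms y2_less_1 by simp
  ultimately show ?thesis
    using min_norm_root_eq[of "ak z ?t" "of_real y"] assms(1) unfolding Y0_def dk_def by simp
qed

lemma X0_Y0pm:
  assumes "x1 z \<le> x" "x \<le> x2 z" "s^2 = 1"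
  shows "X0 z (Y0pm s z x) = of_real x"
proof -
  let ?t = "Y0pm s z x"
  have "0 < x" "x < 1" using assms x1_pos x2_less_1 by auto
  have m: "cmod ?t = 1/x" using norm_Y0pm[OF assms] .
  then have "?t \<noteq> 0" "?t + 1 \<noteq> 0"
    using \<open>0 < x\<close> \<open>x < 1\<close> by (auto simp: add_eq_0_iff2)
  then have "atil z ?t \<noteq> 0" using z_pos by (simp add: atil_def)
  moreover have "atil z ?t * (of_real x)^2 + btil z ?t * of_real x + ctil z ?t = 0"
    using Y0pm_root[OF assms] kernel_sym[of z ?t "of_real x"] by simp
  moreover have "cmod (ctil z ?t / (atil z ?t * of_real x)) = 1 / (cmod ?t * x)"
    using \<open>0 < x\<close> \<open>?t \<noteq> 0\<close> \<open>?t + 1 \<noteq> 0\<close> z_pos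
    by (simp add: atil_def ctil_def norm_divide norm_mult)
  then have "cmod (complex_of_real x) < cmod (ctil z ?t / (atil z ?t * of_real x))"
    using m \<open>0 < x\<close> \<open>x < 1\<close> by simp
  ultimately show ?thesis
    using min_norm_root_eq[of "atil z ?t" "of_real x"] \<open>0 < x\<close> unfolding X0_def dtil_def by simp
qed

text \<open>Xb0_side s continues Xb0 across the segment (0, y2) from the half-plane s Im y > 0; on the
  segment it takes the boundary values X0pm s.\<close>

definition Xb0_side :: "real \<Rightarrow> complex \<Rightarrow> complex" where
  "Xb0_side s y = (- btil z y - 2 * of_real z * csqrt y * (of_real s * \<i> * csqrt (of_real (y2 z) - y))
      * csqrt (of_real (y3 z) - y)) / (2 * atil z y)"

lemma Xb0_eq_side:
  assumes "s = 1 \<or> s = -1" "s * Im y > 0"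
  shows "Xb0 y = Xb0_side s y"
proof -
  have "csqrt (y - of_real (y2 z)) = of_real s * \<i> * csqrt (of_real (y2 z) - y)"
    using assms(1)
  proof (elim disjE)
    assume "s = 1"
    then have "csqrt (- (of_real (y2 z) - y)) = \<i> * csqrt (of_real (y2 z) - y)"
      using assms(2) by (intro csqrt_minus) simp
    then show ?thesis using \<open>s = 1\<close> by simp
  next
    assume "s = -1"
    then have "csqrt (- (y - of_real (y2 z))) = \<i> * csqrt (y - of_real (y2 z))"
      using assms(2) by (intro csqrt_minus) simp
    then show ?thesis using \<open>s = -1\<close> by (simp add: algebra_simps)
  qed
  then show ?thesis by (simp add: Xb0_def Xb0_side_def disc_sqrt_def mult_ac)
qed

lemma Xb0_side_holomorphic: "Xb0_side s holomorphic_on {w. 0 < Re w \<and> Re w < y2 z}"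
proof -
  have "w \<notin> \<real>\<^sub>\<le>\<^sub>0" "of_real (y2 z) - w \<notin> \<real>\<^sub>\<le>\<^sub>0" "of_real (y3 z) - w \<notin> \<real>\<^sub>\<le>\<^sub>0"
    "atil z w \<noteq> 0" if "0 < Re w" "Re w < y2 z" for w
  proof -
    show "w \<notin> \<real>\<^sub>\<le>\<^sub>0" "of_real (y2 z) - w \<notin> \<real>\<^sub>\<le>\<^sub>0" "of_real (y3 z) - w \<notin> \<real>\<^sub>\<le>\<^sub>0"
      using that y2_less_y3 by (auto simp: complex_nonpos_Reals_iff)
    have "w \<noteq> 0" "w + 1 \<noteq> 0" using that by (auto simp: complex_eq_iff)
    then show "atil z w \<noteq> 0" using z_pos by (simp add: atil_def)
  qed
  then show ?thesis unfolding Xb0_side_def btil_def atil_def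
    by (intro holomorphic_intros) auto
qed

lemma Xb0_side_of_real:
  assumes "0 < p" "p < y2 z"
  shows "Xb0_side s (of_real p) = X0pm s z p"
proof -
  have "- dtil z p = (2*z)^2 * p * (y2 z - p) * (y3 z - p)"
    unfolding dtil_factor by (simp add: algebra_simps power2_eq_square)
  then have "sqrt (- dtil z p) = 2 * z * sqrt p * sqrt (y2 z - p) * sqrt (y3 z - p)"
    using assms y2_less_y3 z_pos by (simp add: real_sqrt_mult)
  moreover have "csqrt (of_real (y2 z) - of_real p) = of_real (sqrt (y2 z - p))"
    "csqrt (of_real (y3 z) - of_real p) = of_real (sqrt (y3 z - p))"
    using assms y2_less_y3 by (simp_all flip: of_real_diff)
  ultimately show ?thesis
    using assms by (simp add: Xb0_side_def X0pm_def atil_def btil_def mult_ac)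
qed

section \<open>The domains GX and GY\<close>

text \<open>Writing the real part of a non-real kernel root in terms of its modulus gives pX = 0 (roots in
  x) and phY = 0 (roots in y); the signs of pX and phY separate GX and GY from the cuts.\<close>

definition pX :: "complex \<Rightarrow> real" where
  "pX w = 2*z*Re w*((cmod w)^2 + 1) - (cmod w)^2"

definition phY :: "complex \<Rightarrow> real" where
  "phY w = 2*z*Re w - cmod w + z*(1 + (cmod w)^2)"

lemma Xcurve_if_pX:
  assumes "1 < Re w" "pX w = 0"
  shows "w \<in> Xcurve z"
proof -
  define r where "r = (cmod w)^2"
  have "0 < r" using assms(1) by (auto simp: r_def)
  define y where "y = 1 / r"
  have "0 < y" using \<open>0 < r\<close> by (simp add: y_def)
  have "Re w * (2*z*(r + 1)) = r"
    using assms(2) by (simp add: pX_def r_def algebra_simps)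
  moreover have "2*z*(r + 1) \<noteq> 0" using \<open>0 < r\<close> z_pos by simp
  ultimately have "Re w = r / (2*z*(r + 1))" by (simp add: eq_divide_eq)
  then have Re: "Re w = 1 / (2*z*(y+1))"
    using \<open>0 < r\<close> z_pos by (simp add: y_def field_simps)
  have "atil z y > 0" using \<open>0 < y\<close> z_pos by (simp add: atil_def)
  moreover have "z * (y + 1) \<noteq> 0" using \<open>0 < y\<close> z_pos by simp
  then have "Re w = - btil z y / (2 * atil z y)" "(cmod w)^2 = ctil z y / atil z y"
    using \<open>0 < y\<close> unfolding Re r_def[symmetric]
    by (simp_all add: atil_def btil_def ctil_def y_def)
  ultimately have "dtil z y \<le> 0" and "\<exists>s\<in>{1,-1}. X0pm s z y = w"
    using pm_root_if_Re_norm[of "atil z y" w "btil z y" "ctil z y"]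
    by (simp_all add: dtil_def X0pm_def)
  have "y < y3 z"
  proof (rule ccontr)
    assume "\<not> y < y3 z"
    then have "1 < 2*z*(y+1)" using y3_large z_pos by (smt (verit) mult_left_mono)
    moreover have "0 < 2*z*(y+1)" using z_pos \<open>0 < y\<close> by simp
    then have "2*z*(y+1) < 1" using Re assms(1) by (simp add: less_divide_eq)
    ultimately show False by simp
  qed
  then have "0 < y * (y3 z - y) * (4*z^2)" using \<open>0 < y\<close> z_pos by simp
  moreover have "(y - y2 z) * (y * (y3 z - y) * (4*z^2)) \<le> 0"
    using \<open>dtil z y \<le> 0\<close> by (simp add: dtil_factor algebra_simps)
  ultimately have "y \<le> y2 z"
    using mult_right_le_imp_le[of "y - y2 z" "y * (y3 z - y) * (4*z^2)" 0] by simp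
  then show ?thesis
    using \<open>\<exists>s\<in>{1,-1}. X0pm s z y = w\<close> \<open>0 < y\<close> \<open>atil z y > 0\<close>
    unfolding Xcurve_def y1_def by force
qed

lemma Ycurve_if_phY:
  assumes "1 < cmod w" "phY w = 0"
  shows "w \<in> Ycurve z"
proof -
  define \<rho> where "\<rho> = cmod w"
  define x where "x = 1 / \<rho>"
  have "1 < \<rho>" using assms(1) by (simp add: \<rho>_def)
  then have x: "0 < x" "x < 1" by (auto simp: x_def divide_less_eq)
  have "ak z x > 0" using x z_pos by (simp add: ak_def)
  have "Re w = (\<rho> - z - z*\<rho>^2) / (2*z)"
    using assms(2) z_pos by (simp add: phY_def \<rho>_def field_simps)
  moreover have "(\<rho> - z - z*\<rho>^2) / (2*z) = - bk z x / (2 * ak z x)"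
    using \<open>1 < \<rho>\<close> z_pos by (simp add: ak_def bk_def x_def field_simps power2_eq_square)
  moreover have "(cmod w)^2 = ck z x / ak z x"
    using \<open>1 < \<rho>\<close> z_pos by (simp add: ak_def ck_def x_def \<rho>_def field_simps)
  moreover note \<open>ak z x > 0\<close>
  ultimately have "dk z x \<le> 0" and "\<exists>s\<in>{1,-1}. Y0pm s z x = w"
    using pm_root_if_Re_norm[of "ak z x" w "bk z x" "ck z x"]
    by (simp_all add: dk_def Y0pm_def)
  have "z * (x - x3 z) < 0" using x x3_greater_1 z_pos by (simp add: mult_pos_neg)
  then have "0 < z * (x - x3 z) * (x - x4 z)"
    using x x3_greater_1 x_roots_interlace(3) by (simp add: mult_neg_neg)
  then have "(x - x1 z) * (x - x2 z) \<le> 0"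
    using \<open>dk z x \<le> 0\<close> z_pos unfolding dk_factor
    by (smt (verit, best) mult.commute mult.left_commute mult_pos_pos)
  then have "x1 z \<le> x" "x \<le> x2 z"
    using x_roots_interlace(1) by (auto simp: mult_le_0_iff)
  then show ?thesis using \<open>\<exists>s\<in>{1,-1}. Y0pm s z x = w\<close> unfolding Ycurve_def by force
qed

lemma closure_GX: "closure (GX z) \<subseteq> - (complex_of_real ` {x3 z..x4 z})"
proof -
  have "closure (GX z) \<subseteq> {w. pX w \<le> 0 \<or> Re w \<le> 1}"
    unfolding GX_def
  proof (rule closure_connected_component_subset)
    show "continuous_on UNIV pX" unfolding pX_def by (intro continuous_intros)
    show "pX w < 0" if "Re w = 1" for w
    proof -
      have "(cmod w)^2 = 1 + (Im w)^2" using that by (simp add: cmod_power2)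
      then have "pX w = (4*z - 1) + (Im w)^2 * (2*z - 1)" using that by (simp add: pX_def algebra_simps)
      moreover have "(Im w)^2 * (2*z - 1) \<le> 0" using z_less by (simp add: mult_nonneg_nonpos)
      ultimately show ?thesis using z_less by simp
    qed
  qed (use Xcurve_if_pX x1_less_1 in \<open>auto intro: continuous_intros\<close>)
  moreover have "0 < pX (of_real t)" "1 < t" if "x3 z \<le> t" for t
  proof -
    show "1 < t" using that x3_greater_1 by simp
    have "2*z*t^2 - t + 2*z = 2*(z*(t - x2 z)*(t - x3 z)) + (1 - 4*z)*t"
      unfolding x23_factor by (simp add: algebra_simps)
    also have "\<dots> > 0"
      using that \<open>1 < t\<close> z_pos z_less x_roots_interlace(2) by (simp add: add_nonneg_pos)
    finally have "0 < t * (2*z*t^2 - t + 2*z)" using \<open>1 < t\<close> by simp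
    also have "t * (2*z*t^2 - t + 2*z) = pX (of_real t)"
      by (simp add: pX_def algebra_simps power2_eq_square)
    finally show "0 < pX (of_real t)" .
  qed
  ultimately show ?thesis by fastforce
qed

lemma closure_GY: "closure (GY z) \<subseteq> - (complex_of_real ` {y3 z..})"
proof -
  have "closure (GY z) \<subseteq> {w. phY w \<le> 0 \<or> cmod w \<le> 1}"
    unfolding GY_def
  proof (rule closure_connected_component_subset)
    show "continuous_on UNIV phY" unfolding phY_def by (intro continuous_intros)
    show "phY w < 0" if "cmod w = 1" for w
    proof -
      have "2*z*Re w \<le> 2*z" using that complex_Re_le_cmod[of w] z_pos by simp
      then show ?thesis using that z_less by (simp add: phY_def)
    qed
  qed (use Ycurve_if_phY in \<open>auto simp: y1_def intro: continuous_intros\<close>)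
  moreover have "0 < phY (of_real t)" "1 < t" if "y3 z \<le> t" for t
  proof -
    show "1 < t" using that y3_greater_1 by simp
    have "0 \<le> 4*z^2*(t - y2 z)*(t - y3 z)" using that y2_less_y3 by simp
    then have "t \<le> 4*z * (z*(t+1)^2)" unfolding y_factor by (simp add: power2_eq_square mult_ac)
    also have "\<dots> < z*(t+1)^2" using z_pos z_less \<open>1 < t\<close> by simp
    finally show "0 < phY (of_real t)"
      using \<open>1 < t\<close> by (simp add: phY_def algebra_simps power2_eq_square)
  qed
  ultimately show ?thesis by fastforce
qed

end

section \<open>Continuation of the kernel relation\<close>

locale gessel_continuation = gessel_param +
  fixes F G :: "complex \<Rightarrow> complex"
  assumes F_hol: "F holomorphic_on (- (complex_of_real ` {x3 z..x4 z}))"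
    and F_ext: "\<And>x. cmod x < 1 \<Longrightarrow> F x = complex_of_real z * Qgf x 0 z"
    and G_hol: "G holomorphic_on (- (complex_of_real ` {y3 z..}))"
    and G_ext: "\<And>y. cmod y < 1 \<Longrightarrow> G y = complex_of_real z * (y + 1) * Qgf 0 y z"
begin

lemma kernel_relation_disc:
  assumes "cmod x < 1" "cmod y < 1" "atil z y * x^2 + btil z y * x + ctil z y = 0"
  shows "F x + G y - F 0 = x * y"
proof -
  let ?S = "y + x^2*y^2 + x^2*y + 1"
  have "of_real z * ?S = x * y"
    using assms(3) by (simp add: atil_def btil_def ctil_def algebra_simps power2_eq_square)
  then have "of_real z * (?S * Qgf x y z) = x * y * Qgf x y z" by (simp add: mult.assoc[symmetric])
  then have "0 = x * y - of_real z * (y * Qgf 0 y z + (Qgf x 0 z + Qgf 0 y z - Qgf 0 0 z))"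
    using Qgf_kernel_equation[of x y z] assms(1,2) z_pos z_less by (simp add: algebra_simps)
  moreover have "F x = of_real z * Qgf x 0 z" "G y = of_real z * (y + 1) * Qgf 0 y z"
    "F 0 = of_real z * Qgf 0 0 z"
    using F_ext G_ext assms(1,2) by auto
  ultimately show ?thesis by (simp add: algebra_simps)
qed

lemma G_holomorphic_slit: "G holomorphic_on slit_domain"
proof -
  have "y \<notin> complex_of_real ` {y3 z..}" if "y \<in> slit_domain" for y
    using slit_domain_memD(7)[OF that] by auto
  then show ?thesis by (intro holomorphic_on_subset[OF G_hol]) blast
qed

lemma F_Xb0_holomorphic: "(\<lambda>y. F (Xb0 y)) holomorphic_on slit_domain"
  by (rule holomorphic_on_compose_gen[OF Xb_holomorphic(1) F_hol, unfolded o_def])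
    (use Xb0_notin_cut in auto)

text \<open>The relation holds near a point of the gap where both Xb0 and y are in the unit disc,
  hence everywhere on the connected slit domain.\<close>

lemma kernel_relation_slit:
  assumes "y \<in> slit_domain"
  shows "F (Xb0 y) + G y - Xb0 y * y = F 0"
proof -
  define U where "U = (slit_domain \<inter> Xb0 -` ball 0 1) \<inter> ball 0 1"
  have "open (slit_domain \<inter> Xb0 -` ball 0 1)"
    by (rule continuous_open_preimage[OF holomorphic_on_imp_continuous_on[OF Xb_holomorphic(1)]
        slit_domain_open open_ball])
  then have U_open: "open U" unfolding U_def by (rule open_Int[OF _ open_ball])
  define r where "r = (1 + max (y2 z) (x2 z)) / 2"
  have "y2 z < r" "x2 z < r" "r < 1" using y2_less_1 x2_less_1 by (auto simp: r_def)
  then have "of_real r \<in> U"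
    using norm_Xb0_of_real_less_1 y3_greater_1 y2_pos by (auto simp: U_def slit_domain_def)
  then have "U \<noteq> {}" by auto
  moreover have "U \<subseteq> slit_domain" by (auto simp: U_def)
  moreover have "(\<lambda>y. F (Xb0 y) + G y - Xb0 y * y) holomorphic_on slit_domain"
    using F_Xb0_holomorphic Xb_holomorphic(1) G_holomorphic_slit by (intro holomorphic_intros)
  moreover have "F (Xb0 w) + G w - Xb0 w * w = F 0" if "w \<in> U" for w
    using kernel_relation_disc[of "Xb0 w" w] Xb0_root[of w] that by (auto simp: U_def algebra_simps)
  moreover have "(\<lambda>y. F 0) holomorphic_on slit_domain" by simp
  ultimately show ?thesis
    using analytic_continuation_open[of U slit_domain "\<lambda>y. F (Xb0 y) + G y - Xb0 y * y" "\<lambda>y. F 0" y]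
      U_open slit_domain_open slit_domain_connected assms by blast
qed

lemma kernel_relation_Ycurve:
  assumes "x1 z \<le> x" "x \<le> x2 z" "s^2 = 1" "Im (Y0pm s z x) \<noteq> 0"
  shows "F (of_real x) + G (Y0pm s z x) - of_real x * Y0pm s z x = F 0"
proof -
  let ?t = "Y0pm s z x"
  have "0 < x" "x < 1" using assms x1_pos x2_less_1 by auto
  have t: "?t \<in> slit_domain" using assms(4) by (simp add: slit_domain_def)
  have "atil z ?t * (of_real x)^2 + btil z ?t * of_real x + ctil z ?t = 0"
    using Y0pm_root[OF assms(1-3)] kernel_sym[of z ?t "of_real x"] by simp
  then have "of_real x = Xb0 ?t \<or> of_real x = Xb1 ?t"
    by (rule quadratic_root_cases[OF slit_domain_memD(6)[OF t] Xb_vieta[OF t]])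
  moreover have "of_real x \<noteq> Xb1 ?t"
  proof
    assume x: "of_real x = Xb1 ?t"
    have "cmod (Xb0 ?t) * x = cmod (Xb0 ?t * Xb1 ?t)"
      using x[symmetric] \<open>0 < x\<close> by (simp add: norm_mult)
    also have "\<dots> = 1 / cmod ?t" using Xb_prod_sum(1)[OF t] by (simp add: norm_divide)
    finally have "cmod (Xb0 ?t) * x = 1 / cmod ?t" .
    then have "cmod (Xb0 ?t) = 1" using norm_Y0pm[OF assms(1-3)] \<open>0 < x\<close> by simp
    then show False using norm_Xb0_less[OF t] x[symmetric] \<open>x < 1\<close> \<open>0 < x\<close> by simp
  qed
  ultimately have "Xb0 ?t = of_real x" by simp
  then show ?thesis using kernel_relation_slit[OF t] by (simp add: mult.commute)
qed

text \<open>On the segment (0, y2) the relation is the limit of the relation on the slit domain,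
  approached from the half-plane s Im y > 0.\<close>

lemma kernel_relation_Xcurve:
  assumes p: "0 < p" "p < y2 z" and s: "s = 1 \<or> s = -1"
  shows "F (X0pm s z p) + G (of_real p) - X0pm s z p * of_real p = F 0"
proof -
  define h where "h = (\<lambda>y. F (Xb0_side s y) + G y - Xb0_side s y * y)"
  define q where "q = (\<lambda>n. of_real p + \<i> * of_real (s * inverse (real (Suc n))))"
  have "Im (X0pm s z p) \<noteq> 0" using Im_X0pm_nonzero p s by auto
  then have F: "isCont F (Xb0_side s (of_real p))"
    using Xb0_side_of_real[OF p] F_hol open_Compl_of_real_image
    by (intro holomorphic_on_imp_isCont[of _ "- (complex_of_real ` {x3 z..x4 z})"]) auto
  have G: "isCont G (of_real p)"
    using G_hol p y2_less_y3 open_Compl_of_real_image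
    by (intro holomorphic_on_imp_isCont[of _ "- (complex_of_real ` {y3 z..})"]) auto
  have "open {w. 0 < Re w \<and> Re w < y2 z}"
    by (intro open_Collect_conj open_Collect_less continuous_intros)
  then have X: "isCont (Xb0_side s) (of_real p)"
    using Xb0_side_holomorphic p by (intro holomorphic_on_imp_isCont) auto
  have "isCont h (of_real p)"
    unfolding h_def by (intro isCont_diff isCont_add isCont_mult isCont_o2[OF X F] G X continuous_ident)
  moreover have "q \<longlonglongrightarrow> of_real p + \<i> * of_real (s * 0)"
    unfolding q_def
    by (intro tendsto_add tendsto_const tendsto_mult tendsto_of_real LIMSEQ_inverse_real_of_nat)
  then have "q \<longlonglongrightarrow> of_real p" by simp
  ultimately have "(\<lambda>n. h (q n)) \<longlonglongrightarrow> h (of_real p)" by (rule isCont_tendsto_compose)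
  moreover have "h (q n) = F 0" for n
  proof -
    have "s * Im (q n) > 0" using s by (auto simp: q_def)
    then have "q n \<in> slit_domain" "Xb0 (q n) = Xb0_side s (q n)"
      using Xb0_eq_side[OF s] by (auto simp: slit_domain_def)
    then show ?thesis using kernel_relation_slit unfolding h_def by metis
  qed
  ultimately have "(\<lambda>n. F 0) \<longlonglongrightarrow> h (of_real p)" by simp
  then have "h (of_real p) = F 0" using LIMSEQ_unique tendsto_const by blast
  then show ?thesis unfolding h_def Xb0_side_of_real[OF p] by (simp add: mult.commute)
qed

lemma F_jump_Xcurve:
  assumes "t \<in> Xcurve z"
  shows "F t - F (cnj t) = t * Y0 z t - cnj t * Y0 z (cnj t)"
proof (cases "Im t = 0")
  case True
  then have "cnj t = t" by (simp add: complex_eq_iff)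
  then show ?thesis by simp
next
  case False
  obtain s y where t: "t = X0pm s z y" and s: "s = 1 \<or> s = -1" and y: "0 \<le> y" "y \<le> y2 z"
    and "atil z y \<noteq> 0"
    using assms unfolding Xcurve_def y1_def by auto
  then have "0 < y" by (cases "y = 0") (auto simp: atil_def)
  moreover have "y \<noteq> y2 z"
  proof
    assume "y = y2 z"
    then have "dtil z y = 0" by (simp add: dtil_factor)
    then show False using False by (simp add: t X0pm_def Im_divide_of_real)
  qed
  ultimately have y': "0 < y" "y < y2 z" using y by auto
  have s': "-s = 1 \<or> -s = -1" "s^2 = 1" "(-s)^2 = 1" using s by auto
  have r: "F t + G (of_real y) - t * of_real y = F 0"
    "F (cnj t) + G (of_real y) - cnj t * of_real y = F 0"
    unfolding t cnj_X0pm using kernel_relation_Xcurve[OF y'] s s'(1) by auto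
  have "Y0 z t = of_real y" "Y0 z (cnj t) = of_real y"
    unfolding t cnj_X0pm using Y0_X0pm[OF y'] s'(2,3) by auto
  moreover have "F t - F (cnj t) = (F t + G (of_real y) - t * of_real y)
      - (F (cnj t) + G (of_real y) - cnj t * of_real y) + (t * of_real y - cnj t * of_real y)"
    by (simp add: algebra_simps)
  ultimately show ?thesis unfolding r by simp
qed

lemma G_jump_Ycurve:
  assumes "t \<in> Ycurve z"
  shows "G t - G (cnj t) = X0 z t * t - X0 z (cnj t) * cnj t"
proof (cases "Im t = 0")
  case True
  then have "cnj t = t" by (simp add: complex_eq_iff)
  then show ?thesis by simp
next
  case False
  obtain s x where t: "t = Y0pm s z x" and s: "s = 1 \<or> s = -1" and x: "x1 z \<le> x" "x \<le> x2 z"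
    using assms unfolding Ycurve_def by auto
  have s': "s^2 = 1" "(-s)^2 = 1" using s by auto
  have "Im (Y0pm s z x) \<noteq> 0" "Im (Y0pm (-s) z x) \<noteq> 0"
    using False by (simp_all add: t flip: cnj_Y0pm)
  then have r: "F (of_real x) + G t - of_real x * t = F 0"
    "F (of_real x) + G (cnj t) - of_real x * cnj t = F 0"
    unfolding t cnj_Y0pm using kernel_relation_Ycurve[OF x] s' by auto
  have "X0 z t = of_real x" "X0 z (cnj t) = of_real x"
    unfolding t cnj_Y0pm using X0_Y0pm[OF x] s' by auto
  moreover have "G t - G (cnj t) = (F (of_real x) + G t - of_real x * t)
      - (F (of_real x) + G (cnj t) - of_real x * cnj t) + (of_real x * t - of_real x * cnj t)"
    by (simp add: algebra_simps)
  ultimately show ?thesis unfolding r by simp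
qed

end

theorem lemma4:
  fixes z :: real and F G :: "complex \<Rightarrow> complex"
  assumes z: "0 < z" "z < 1/4"
    and F_hol: "F holomorphic_on (- (complex_of_real ` {x3 z..x4 z}))"
    and F_ext: "\<And>x. cmod x < 1 \<Longrightarrow> F x = complex_of_real z * Qgf x 0 z"
    and G_hol: "G holomorphic_on (- (complex_of_real ` {y3 z..}))"
    and G_ext: "\<And>y. cmod y < 1 \<Longrightarrow> G y = complex_of_real z * (y + 1) * Qgf 0 y z"
  shows "F holomorphic_on GX z \<and> continuous_on (closure (GX z)) F \<and>
         (\<forall>t\<in>Xcurve z. F t - F (cnj t) = t * Y0 z t - cnj t * Y0 z (cnj t)) \<and>
         G holomorphic_on GY z \<and> continuous_on (closure (GY z)) G \<and>
         (\<forall>t\<in>Ycurve z. G t - G (cnj t) = X0 z t * t - X0 z (cnj t) * cnj t)"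
proof -
  interpret gessel_continuation z F G
    by unfold_locales (use assms in auto)
  show ?thesis
  proof (intro conjI ballI)
    show "F holomorphic_on GX z"
      using closure_GX closure_subset by (intro holomorphic_on_subset[OF F_hol]) blast
    show "continuous_on (closure (GX z)) F"
      by (rule continuous_on_subset[OF holomorphic_on_imp_continuous_on[OF F_hol] closure_GX])
    show "G holomorphic_on GY z"
      using closure_GY closure_subset by (intro holomorphic_on_subset[OF G_hol]) blast
    show "continuous_on (closure (GY z)) G"
      by (rule continuous_on_subset[OF holomorphic_on_imp_continuous_on[OF G_hol] closure_GY])
  qed (use F_jump_Xcurve G_jump_Ycurve in auto)
qed

end
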